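(* Consider the model $X=ZL^T+E$ with $X\in\mathcal{M}(N,P)$, $Z\in\mathcal{S}(N,K)$, entries $l_{p,k}$ of $L\in\mathcal{M}(P,K)$ independent with $l_{p,k}\sim g_k\in\mathcal{G}$, and $e_{n,p}$ i.i.d. $N(0,1/\tau)$, $\tau>0$. Define, for $\mathbf{g}=(g_1,\dots,g_K)\in\mathcal{G}^K$, $Z\in\mathcal{S}(N,K)$, $\tau>0$ and $q$ a probability distribution on $\mathcal{M}(P,K)$ with finite second moments, $$F(\mathbf{g},Z,\tau,q)=\mathbb{E}_q\log p(X\mid Z,L,\tau)-\mathrm{KL}(q\,\|\,\mathbf{g}),$$ where $p(X\mid Z,L,\tau)=\prod_{n,p}N(x_{n,p};(ZL^T)_{n,p},1/\tau)$ and $\mathbf{g}(L)=\prod_{p,k}g_k(l_{p,k})$. Then: (1) (EBNM step) For fixed $Z\in\mathcal{S}(N,K)$ and $\tau$, a maximizer of $F$ over $(\mathbf{g},q)$ is obtained by taking, for each $k$, $(g_k,q_k)=\mathrm{EBNM}(X^Tz_k,1/\tau,\mathcal{G})$ and $q(L)=\prod_k q_k(l_k)$ (assuming these EBNM solutions exist). (2) (Rotation step) For fixed $\mathbf{g},q,\tau$, the maximum of $F$ over $Z\in\mathcal{S}(N,K)$ is attained at $Z=\mathrm{Polar.U}(X\bar L)$, where $\bar L=\mathbb{E}_q(L)$. (3) (Precision step) For fixed $\mathbf{g},Z,q$, provided the denominator below is positive, the maximum of $F$ over $\tau>0$ is attained at $$\tau=\frac{NP}{\|X-Z\bar L^T\|_F^2+\|V\|_{1,1}},$$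 where $V$ is the $P\times K$ matrix with $v_{p,k}=\mathrm{Var}_q(l_{p,k})$ and $\|V\|_{1,1}=\sum_{p,k}v_{p,k}$.
   Context: $\mathcal{M}(N,K)$ is the set of real $N\times K$ matrices, $\mathcal{S}(N,K)=\{M\in\mathcal{M}(N,K):M^TM=I_K\}$, $z_k$ and $l_k$ denote $k$-th columns, $\mathcal{G}$ is a prespecified family of distributions on $\mathbb{R}$. $\mathrm{KL}(q\|g)=\mathbb{E}_q[\log(q(L)/g(L))]$. For a real matrix $M$ with thin SVD $M=UDV^T$, $\mathrm{Polar.U}(M):=UV^T$. EBNM: for $x\in\mathbb{R}^P$, $s^2>0$, $\mathrm{EBNM}(x,s^2,\mathcal{G}):=\arg\max_{g\in\mathcal{G},\,q}\big(\mathbb{E}_q\log p(x\mid\eta,s^2)-\mathrm{KL}(q\|g)\big)$, where $p(x\mid\eta,s^2)=\prod_{p=1}^P N(x_p;\eta_p,s^2)$, $q$ ranges over all distributions on $\eta=(\eta_1,\dots,\eta_P)$, and $g$ is used as the i.i.d. prior $\prod_p g(\eta_p)$; it returns the optimal pair $(g,q)$. *)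

theory Defs
  imports "HOL-Probability.Probability"
begin

definition is_dist :: "'a::topological_space measure \<Rightarrow> bool" where
  "is_dist M \<longleftrightarrow> prob_space M \<and> sets M = sets borel"

definition ext_exp :: "'a measure \<Rightarrow> ('a \<Rightarrow> real) \<Rightarrow> ereal" where
  "ext_exp q f = enn2ereal (\<integral>\<^sup>+ x. ennreal (f x) \<partial>q) - enn2ereal (\<integral>\<^sup>+ x. ennreal (- f x) \<partial>q)"

definition KL :: "'a measure \<Rightarrow> 'a measure \<Rightarrow> ereal" where
  "KL q g = (if absolutely_continuous g q
             then ext_exp q (\<lambda>x. ln (enn2real (RN_deriv g q x)))
             else \<infinity>)"

definition stiefel :: "(real^'k^'n) set" where
  "stiefel = {Z. transpose Z ** Z = mat 1}"

definition frob_sq :: "real^'c^'r \<Rightarrow> real" where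
  "frob_sq M = (\<Sum>i\<in>UNIV. \<Sum>j\<in>UNIV. (M $ i $ j)\<^sup>2)"

definition thin_svd :: "real^'k^'n \<Rightarrow> real^'k^'n \<Rightarrow> real^'k^'k \<Rightarrow> real^'k^'k \<Rightarrow> bool" where
  "thin_svd M U D V \<longleftrightarrow> U \<in> stiefel \<and> transpose V ** V = mat 1 \<and>
     (\<forall>i j. i \<noteq> j \<longrightarrow> D $ i $ j = 0) \<and> (\<forall>i. D $ i $ i \<ge> 0) \<and>
     M = U ** D ** transpose V"

definition is_polarU :: "real^'k^'n \<Rightarrow> real^'k^'n \<Rightarrow> bool" where
  "is_polarU M Z \<longleftrightarrow> (\<exists>U D V. thin_svd M U D V \<and> Z = U ** transpose V)"

definition prior_vec :: "real measure \<Rightarrow> (real^'p) measure" where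
  "prior_vec g = distr (PiM UNIV (\<lambda>_. g)) borel (\<lambda>f. \<chi> p. f p)"

definition prior_mat :: "('k \<Rightarrow> real measure) \<Rightarrow> (real^'k^'p) measure" where
  "prior_mat gs = distr (PiM (UNIV :: ('p \<times> 'k) set) (\<lambda>(p,k). gs k)) borel
                        (\<lambda>f. \<chi> p. \<chi> k. f (p, k))"

definition prod_cols :: "('k \<Rightarrow> (real^'p) measure) \<Rightarrow> (real^'k^'p) measure" where
  "prod_cols qs = distr (PiM UNIV qs) borel (\<lambda>f. \<chi> p. \<chi> k. f k $ p)"

definition ebnm_obj :: "real^'p \<Rightarrow> real \<Rightarrow> real measure \<Rightarrow> (real^'p) measure \<Rightarrow> ereal" where
  "ebnm_obj x s2 g q =
     ext_exp q (\<lambda>\<eta>. ln (\<Prod>p\<in>UNIV. normal_density (\<eta> $ p) (sqrt s2) (x $ p)))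
     - KL q (prior_vec g)"

definition is_EBNM :: "real^'p \<Rightarrow> real \<Rightarrow> real measure set \<Rightarrow> real measure \<Rightarrow> (real^'p) measure \<Rightarrow> bool" where
  "is_EBNM x s2 G g q \<longleftrightarrow> g \<in> G \<and> is_dist q \<and>
     (\<forall>g'\<in>G. \<forall>q'. is_dist q' \<longrightarrow> ebnm_obj x s2 g' q' \<le> ebnm_obj x s2 g q)"

definition fin2 :: "(real^'k^'p) measure \<Rightarrow> bool" where
  "fin2 q \<longleftrightarrow> is_dist q \<and> integrable q (\<lambda>L. (norm L)\<^sup>2)"

definition loglik :: "real^'p^'n \<Rightarrow> real^'k^'n \<Rightarrow> real \<Rightarrow> real^'k^'p \<Rightarrow> real" where
  "loglik X Z \<tau> L = ln (\<Prod>n\<in>UNIV. \<Prod>p\<in>UNIV.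
       normal_density ((Z ** transpose L) $ n $ p) (sqrt (1 / \<tau>)) (X $ n $ p))"

definition Fobj :: "real^'p^'n \<Rightarrow> ('k \<Rightarrow> real measure) \<Rightarrow> real^'k^'n \<Rightarrow> real \<Rightarrow> (real^'k^'p) measure \<Rightarrow> ereal" where
  "Fobj X gs Z \<tau> q = ext_exp q (loglik X Z \<tau>) - KL q (prior_mat gs)"

definition Lbar :: "(real^'k^'p) measure \<Rightarrow> real^'k^'p" where
  "Lbar q = integral\<^sup>L q (\<lambda>L. L)"

definition Vmat :: "(real^'k^'p) measure \<Rightarrow> real^'k^'p" where
  "Vmat q = (\<chi> p. \<chi> k. integral\<^sup>L q (\<lambda>L. (L $ p $ k - Lbar q $ p $ k)\<^sup>2))"

end

theory Submission
  imports Defs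
begin

text \<open>
  For \<open>Z\<close> with orthonormal columns and \<open>M = E\<^sub>q L\<close>, the expected log-likelihood is
  \<open>-(NP/2) ln (2\<pi>/\<tau>) - (\<tau>/2) (\<parallel>X - Z M\<^sup>T\<parallel>\<^sup>2 + \<Sum> V)\<close> (a bias-variance decomposition).
  Since \<open>\<parallel>X - Z M\<^sup>T\<parallel>\<^sup>2 = \<parallel>X\<parallel>\<^sup>2 - 2 tr (Z\<^sup>T X M) + \<parallel>M\<parallel>\<^sup>2\<close>, the rotation step is von Neumann's
  trace inequality, maximised by the polar factor of \<open>X M\<close>, and the precision step is the
  maximisation of \<open>(NP/2) ln \<tau> - \<tau> S/2\<close>.

  For the EBNM step, the log-likelihood is a constant plus the sum over \<open>k\<close> of the EBNM
  log-likelihoods of the columns \<open>l\<^sub>k\<close> given the data \<open>X\<^sup>T z\<^sub>k\<close>. Gibbs' variational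
  principle \<open>E\<^sub>q f - KL(q\<parallel>g) \<le> ln E\<^sub>g e\<^sup>f\<close>, with equality at the Gibbs measure, bounds \<open>F\<close> for
  fixed priors by the constant plus the sum of the log marginal likelihoods of the \<open>X\<^sup>T z\<^sub>k\<close>.
  Each EBNM solution maximises its summand, and the product of the EBNM posteriors attains the
  bound, because the KL divergence of product measures is additive.
\<close>

lemma ln_normal_density_precision:
  assumes "\<tau> > 0"
  shows "ln (normal_density m (sqrt (1/\<tau>)) x) = - ln (2*pi/\<tau>) / 2 - \<tau> / 2 * (x - m)\<^sup>2"
proof -
  have c: "2*pi/\<tau> > 0" using assms by simp
  have "normal_density m (sqrt (1/\<tau>)) x = 1 / sqrt (2*pi/\<tau>) * exp (- \<tau> * (x - m)\<^sup>2 / 2)"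
    unfolding normal_density_def using assms by (simp add: field_simps)
  also have "ln \<dots> = - ln (2*pi/\<tau>) / 2 - \<tau> / 2 * (x - m)\<^sup>2"
    using c by (simp add: ln_mult_pos ln_div ln_sqrt)
  finally show ?thesis .
qed

lemma ln_prod_normal_density_precision:
  assumes "finite I" and "\<tau> > 0"
  shows "ln (\<Prod>i\<in>I. normal_density (m i) (sqrt (1/\<tau>)) (x i))
           = - real (card I) * ln (2*pi/\<tau>) / 2 - \<tau> / 2 * (\<Sum>i\<in>I. (x i - m i)\<^sup>2)"
proof -
  have "ln (\<Prod>i\<in>I. normal_density (m i) (sqrt (1/\<tau>)) (x i))
          = (\<Sum>i\<in>I. - ln (2*pi/\<tau>) / 2 - \<tau> / 2 * (x i - m i)\<^sup>2)"
    using assms normal_density_pos[of "sqrt (1/\<tau>)"]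
    by (subst ln_prod) (auto simp: ln_normal_density_precision less_imp_neq[symmetric])
  then show ?thesis by (simp add: sum_subtractf sum_distrib_left)
qed

definition ebnm_loglik :: "real^'p::finite \<Rightarrow> real \<Rightarrow> real^'p \<Rightarrow> real" where
  "ebnm_loglik x s2 \<eta> = ln (\<Prod>p\<in>UNIV. normal_density (\<eta> $ p) (sqrt s2) (x $ p))"

lemma ebnm_obj_eq: "ebnm_obj x s2 g q = ext_exp q (ebnm_loglik x s2) - KL q (prior_vec g)"
  by (simp add: ebnm_obj_def ebnm_loglik_def[abs_def])

lemma ebnm_loglik_eq:
  fixes x :: "real^'p::finite"
  assumes "\<tau> > 0"
  shows "ebnm_loglik x (1/\<tau>) \<eta> = - real CARD('p) * ln (2*pi/\<tau>) / 2 - \<tau> / 2 * (\<Sum>p\<in>UNIV. (x $ p - \<eta> $ p)\<^sup>2)"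
  unfolding ebnm_loglik_def using assms by (simp add: ln_prod_normal_density_precision)

lemma loglik_eq:
  fixes X :: "real^'p::finite^'n::finite" and Z :: "real^'k::finite^'n"
  assumes "\<tau> > 0"
  shows "loglik X Z \<tau> L = - real (CARD('n) * CARD('p)) * ln (2*pi/\<tau>) / 2
                             - \<tau> / 2 * frob_sq (X - Z ** transpose L)"
proof -
  have "loglik X Z \<tau> L = ln (\<Prod>(n, p)\<in>UNIV \<times> UNIV.
          normal_density ((Z ** transpose L) $ n $ p) (sqrt (1 / \<tau>)) (X $ n $ p))"
    unfolding loglik_def by (subst prod.cartesian_product) simp
  also have "\<dots> = - real (CARD('n) * CARD('p)) * ln (2*pi/\<tau>) / 2
                  - \<tau> / 2 * (\<Sum>(n, p)\<in>UNIV \<times> UNIV. (X $ n $ p - (Z ** transpose L) $ n $ p)\<^sup>2)"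
    using assms ln_prod_normal_density_precision[of "UNIV \<times> UNIV" \<tau>
        "\<lambda>(n, p). (Z ** transpose L) $ n $ p" "\<lambda>(n, p). X $ n $ p"]
    by (simp add: case_prod_beta card_cartesian_product)
  finally show ?thesis
    by (simp add: frob_sq_def sum.cartesian_product)
qed

definition frob_inner :: "real^'c::finite^'r::finite \<Rightarrow> real^'c^'r \<Rightarrow> real" where
  "frob_inner A B = (\<Sum>i\<in>UNIV. \<Sum>j\<in>UNIV. A $ i $ j * B $ i $ j)"

lemma frob_sq_diff: "frob_sq (A - B) = frob_sq A - 2 * frob_inner A B + frob_sq B"
  by (simp add: frob_sq_def frob_inner_def power2_diff sum.distrib sum_subtractf sum_distrib_left mult_ac)

lemma frob_inner_mult_transpose: "frob_inner X (Z ** transpose L) = frob_inner Z (X ** L)"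
proof -
  have "frob_inner X (Z ** transpose L) = (\<Sum>n\<in>UNIV. \<Sum>p\<in>UNIV. \<Sum>k\<in>UNIV. Z$n$k * (X$n$p * L$p$k))"
    by (simp add: frob_inner_def matrix_matrix_mult_def transpose_def sum_distrib_left mult_ac)
  also have "\<dots> = frob_inner Z (X ** L)"
    unfolding frob_inner_def matrix_matrix_mult_def
    by (simp add: sum_distrib_left) (intro sum.cong refl sum.swap)
  finally show ?thesis .
qed

lemma stiefel_orthonormal:
  fixes Z :: "real^'k::finite^'n::finite"
  assumes "Z \<in> stiefel"
  shows "(\<Sum>n\<in>UNIV. Z$n$i * Z$n$j) = (if i = j then 1 else 0)"
proof -
  have "(transpose Z ** Z) $ i $ j = (mat 1 :: real^'k^'k) $ i $ j"
    using assms by (simp add: stiefel_def)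
  then show ?thesis by (simp add: matrix_matrix_mult_def transpose_def mat_def)
qed

lemma stiefel_sum_sq_mult:
  fixes W :: "real^'k::finite^'n::finite"
  assumes "W \<in> stiefel"
  shows "(\<Sum>n\<in>UNIV. (\<Sum>k\<in>UNIV. W$n$k * v k)\<^sup>2) = (\<Sum>k\<in>UNIV. (v k)\<^sup>2)"
proof -
  have "(\<Sum>n\<in>UNIV. (\<Sum>k\<in>UNIV. W$n$k * v k)\<^sup>2)
      = (\<Sum>n\<in>UNIV. \<Sum>k\<in>UNIV. \<Sum>j\<in>UNIV. (W$n$k * W$n$j) * (v k * v j))"
    by (simp add: power2_eq_square sum_product mult_ac)
  also have "\<dots> = (\<Sum>k\<in>UNIV. \<Sum>j\<in>UNIV. (\<Sum>n\<in>UNIV. W$n$k * W$n$j) * (v k * v j))"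
    by (simp add: sum_distrib_right sum.swap[of _ "UNIV :: 'n set"])
  also have "\<dots> = (\<Sum>k\<in>UNIV. (v k)\<^sup>2)"
    using stiefel_orthonormal[OF assms] by (simp add: power2_eq_square if_distrib[of "\<lambda>c. c * _"] cong: if_cong)
  finally show ?thesis .
qed

lemma frob_sq_stiefel_mult_transpose:
  assumes "Z \<in> stiefel"
  shows "frob_sq (Z ** transpose L) = frob_sq L"
proof -
  have "frob_sq (Z ** transpose L) = (\<Sum>p\<in>UNIV. \<Sum>n\<in>UNIV. (\<Sum>k\<in>UNIV. Z$n$k * L$p$k)\<^sup>2)"
    unfolding frob_sq_def by (subst sum.swap) (simp add: matrix_matrix_mult_def transpose_def)
  then show ?thesis
    by (simp add: stiefel_sum_sq_mult[OF assms] frob_sq_def)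
qed

lemma frob_sq_residual_stiefel:
  assumes "Z \<in> stiefel"
  shows "frob_sq (X - Z ** transpose L) = frob_sq X - 2 * frob_inner Z (X ** L) + frob_sq L"
  by (simp add: frob_sq_diff frob_inner_mult_transpose frob_sq_stiefel_mult_transpose[OF assms])

lemma diag_transpose_mult_mult:
  "(transpose U ** Y ** V) $ i $ i = (\<Sum>n\<in>UNIV. U$n$i * (\<Sum>k\<in>UNIV. Y$n$k * V$k$i))"
proof -
  have "(transpose U ** Y ** V) $ i $ i = (\<Sum>k\<in>UNIV. \<Sum>n\<in>UNIV. U$n$i * Y$n$k * V$k$i)"
    by (simp add: matrix_matrix_mult_def transpose_def sum_distrib_right)
  also have "\<dots> = (\<Sum>n\<in>UNIV. \<Sum>k\<in>UNIV. U$n$i * Y$n$k * V$k$i)"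
    by (rule sum.swap)
  finally show ?thesis by (simp add: sum_distrib_left mult_ac)
qed

lemma stiefel_diag_le_1:
  fixes W U :: "real^'k::finite^'n::finite" and V :: "real^'k^'k"
  assumes W: "W \<in> stiefel" and U: "U \<in> stiefel" and V: "V \<in> stiefel"
  shows "(transpose U ** W ** V) $ i $ i \<le> 1"
proof -
  have "(\<Sum>n\<in>UNIV. U$n$i * (\<Sum>k\<in>UNIV. W$n$k * V$k$i))\<^sup>2
          \<le> (\<Sum>n\<in>UNIV. (U$n$i)\<^sup>2) * (\<Sum>n\<in>UNIV. (\<Sum>k\<in>UNIV. W$n$k * V$k$i)\<^sup>2)"
    by (rule Cauchy_Schwarz_ineq_sum)
  also have "\<dots> = 1"
    using stiefel_orthonormal[OF U, of i i] stiefel_orthonormal[OF V, of i i]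
      stiefel_sum_sq_mult[OF W, of "\<lambda>k. V$k$i"]
    by (simp add: power2_eq_square)
  finally have "\<bar>\<Sum>n\<in>UNIV. U$n$i * (\<Sum>k\<in>UNIV. W$n$k * V$k$i)\<bar> \<le> 1"
    by (simp only: abs_square_le_1)
  then show ?thesis
    unfolding diag_transpose_mult_mult by linarith
qed

lemma thin_svd_nth:
  assumes "thin_svd M U D V"
  shows "M $ n $ k = (\<Sum>i\<in>UNIV. U$n$i * D$i$i * V$k$i)"
proof -
  have diag: "\<And>i j. i \<noteq> j \<Longrightarrow> D$i$j = 0" and M: "M = U ** D ** transpose V"
    using assms by (auto simp: thin_svd_def)
  have "M $ n $ k = (\<Sum>j\<in>UNIV. (\<Sum>i\<in>UNIV. U$n$i * D$i$j) * V$k$j)"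
    by (simp add: M matrix_matrix_mult_def transpose_def)
  also have "\<dots> = (\<Sum>j\<in>UNIV. U$n$j * D$j$j * V$k$j)"
  proof (intro sum.cong refl)
    fix j
    have "(\<Sum>i\<in>UNIV. U$n$i * D$i$j) = U$n$j * D$j$j"
      by (subst sum.remove[of _ j]) (auto simp: diag intro!: sum.neutral)
    then show "(\<Sum>i\<in>UNIV. U$n$i * D$i$j) * V$k$j = U$n$j * D$j$j * V$k$j" by simp
  qed
  finally show ?thesis .
qed

lemma frob_inner_thin_svd:
  assumes "thin_svd M U D V"
  shows "frob_inner Y M = (\<Sum>i\<in>UNIV. D$i$i * (transpose U ** Y ** V) $ i $ i)"
proof -
  have "frob_inner Y M = (\<Sum>n\<in>UNIV. \<Sum>k\<in>UNIV. \<Sum>i\<in>UNIV. D$i$i * (U$n$i * (Y$n$k * V$k$i)))"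
    by (simp add: frob_inner_def thin_svd_nth[OF assms] sum_distrib_left mult_ac)
  also have "\<dots> = (\<Sum>n\<in>UNIV. \<Sum>i\<in>UNIV. \<Sum>k\<in>UNIV. D$i$i * (U$n$i * (Y$n$k * V$k$i)))"
    by (intro sum.cong refl sum.swap)
  also have "\<dots> = (\<Sum>i\<in>UNIV. \<Sum>n\<in>UNIV. \<Sum>k\<in>UNIV. D$i$i * (U$n$i * (Y$n$k * V$k$i)))"
    by (rule sum.swap)
  also have "\<dots> = (\<Sum>i\<in>UNIV. D$i$i * (transpose U ** Y ** V) $ i $ i)"
    by (simp add: diag_transpose_mult_mult sum_distrib_left)
  finally show ?thesis .
qed

lemma frob_inner_le_polar:
  assumes svd: "thin_svd M U D V" and W: "W \<in> stiefel"
  shows "frob_inner W M \<le> frob_inner (U ** transpose V) M"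
proof -
  have U: "U \<in> stiefel" and V: "V \<in> stiefel" and D: "\<And>i. D$i$i \<ge> 0"
    using svd by (auto simp: thin_svd_def stiefel_def)
  have "transpose U ** (U ** transpose V) ** V = (transpose U ** U) ** (transpose V ** V)"
    by (simp add: matrix_mul_assoc)
  then have polar_diag: "transpose U ** (U ** transpose V) ** V = mat 1"
    using U V by (simp add: stiefel_def)
  have "frob_inner W M \<le> (\<Sum>i\<in>UNIV. D$i$i * 1)"
    unfolding frob_inner_thin_svd[OF svd]
    by (intro sum_mono mult_left_mono stiefel_diag_le_1[OF W U V] D)
  also have "\<dots> = frob_inner (U ** transpose V) M"
    unfolding frob_inner_thin_svd[OF svd] polar_diag by (simp add: mat_def)
  finally show ?thesis .
qed

lemma thin_svd_polar_stiefel: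
  assumes "thin_svd M U D V"
  shows "U ** transpose V \<in> stiefel"
proof -
  have u: "transpose U ** U = mat 1" and v: "transpose V ** V = mat 1"
    using assms by (auto simp: thin_svd_def stiefel_def)
  have v': "V ** transpose V = mat 1" using v matrix_left_right_inverse by blast
  have "transpose (U ** transpose V) ** (U ** transpose V) = V ** (transpose U ** U) ** transpose V"
    by (simp add: matrix_transpose_mul matrix_mul_assoc)
  also have "\<dots> = mat 1" by (simp add: u v')
  finally show ?thesis by (simp add: stiefel_def)
qed

lemma ext_exp_eq_integral:
  assumes "integrable q f"
  shows "ext_exp q f = ereal (integral\<^sup>L q f)"
proof -
  have "(\<integral>\<^sup>+ x. ennreal (f x) \<partial>q) < \<infinity>" "(\<integral>\<^sup>+ x. ennreal (- f x) \<partial>q) < \<infinity>"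
    using assms by (auto simp: real_integrable_def less_top)
  then show ?thesis
    unfolding ext_exp_def real_lebesgue_integral_def[OF assms]
    by (cases "\<integral>\<^sup>+ x. ennreal (f x) \<partial>q"; cases "\<integral>\<^sup>+ x. ennreal (- f x) \<partial>q") auto
qed

lemma ext_exp_cong_AE:
  assumes "AE x in Q. f x = g x"
  shows "ext_exp Q f = ext_exp Q g"
proof -
  have "(\<integral>\<^sup>+ x. ennreal (f x) \<partial>Q) = (\<integral>\<^sup>+ x. ennreal (g x) \<partial>Q)"
    and "(\<integral>\<^sup>+ x. ennreal (- f x) \<partial>Q) = (\<integral>\<^sup>+ x. ennreal (- g x) \<partial>Q)"
    using assms by (auto intro!: nn_integral_cong_AE)
  then show ?thesis unfolding ext_exp_def by simp
qed

lemma ext_exp_less_top: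
  assumes "prob_space Q" and B: "\<And>x. f x \<le> B"
  shows "ext_exp Q f < \<infinity>"
proof -
  interpret prob_space Q by fact
  have "(\<integral>\<^sup>+ x. ennreal (f x) \<partial>Q) \<le> (\<integral>\<^sup>+ x. ennreal (max B 0) \<partial>Q)"
    using B by (intro nn_integral_mono) (auto intro: ennreal_leI max.coboundedI1)
  also have "\<dots> = ennreal (max B 0)" by (simp add: emeasure_space_1)
  finally obtain a where "(\<integral>\<^sup>+ x. ennreal (f x) \<partial>Q) = ennreal a" "a \<ge> 0"
    by (cases "\<integral>\<^sup>+ x. ennreal (f x) \<partial>Q") (auto simp: top_unique)
  then show ?thesis
    unfolding ext_exp_def by (cases "\<integral>\<^sup>+ x. ennreal (- f x) \<partial>Q") auto
qed

lemma integrable_if_ext_exp_real: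
  assumes "f \<in> borel_measurable Q" and "ext_exp Q f = ereal e"
  shows "integrable Q f"
proof -
  have "(\<integral>\<^sup>+ x. ennreal (f x) \<partial>Q) \<noteq> \<infinity>" "(\<integral>\<^sup>+ x. ennreal (- f x) \<partial>Q) \<noteq> \<infinity>"
    using assms(2) unfolding ext_exp_def
    by (cases "\<integral>\<^sup>+ x. ennreal (f x) \<partial>Q"; cases "\<integral>\<^sup>+ x. ennreal (- f x) \<partial>Q"; simp)+
  with assms(1) show ?thesis by (simp add: real_integrable_def top.not_eq_extremum)
qed

lemma ext_exp_neq_minf:
  assumes "(\<integral>\<^sup>+ x. ennreal (- f x) \<partial>Q) \<noteq> \<infinity>"
  shows "ext_exp Q f \<noteq> -\<infinity>"
  using assms unfolding ext_exp_def
  by (cases "\<integral>\<^sup>+ x. ennreal (f x) \<partial>Q"; cases "\<integral>\<^sup>+ x. ennreal (- f x) \<partial>Q") auto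

lemma neg_mult_ln_le: "t > 0 \<Longrightarrow> - (t * ln t) \<le> 1 - (t::real)"
  using ln_le_minus_one[of "1/t"] mult_left_mono[of "ln (1/t)" "1/t - 1" t]
  by (simp add: ln_div field_simps)

text \<open>The negative part of \<open>ln (dQ/dP)\<close> has \<open>Q\<close>-integral at most 1, since \<open>-t ln t \<le> 1\<close>.\<close>

lemma KL_neq_minf:
  assumes P: "prob_space P" and S: "sets Q = sets P"
  shows "KL Q P \<noteq> -\<infinity>"
proof (cases "absolutely_continuous P Q")
  case AC: True
  interpret P: prob_space P by (rule P)
  define r where "r = RN_deriv P Q"
  have Q: "density P r = Q" unfolding r_def by (rule P.density_RN_deriv[OF AC S])
  have "(\<integral>\<^sup>+ x. ennreal (- ln (enn2real (r x))) \<partial>Q) = (\<integral>\<^sup>+ x. r x * ennreal (- ln (enn2real (r x))) \<partial>P)"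
    unfolding Q[symmetric] by (rule nn_integral_density) (auto simp: r_def)
  also have "\<dots> \<le> (\<integral>\<^sup>+ x. 1 \<partial>P)"
  proof (intro nn_integral_mono)
    fix x
    show "r x * ennreal (- ln (enn2real (r x))) \<le> 1"
    proof (cases "r x")
      case (real t)
      then show ?thesis
        using neg_mult_ln_le[of t]
        by (cases "t > 0") (auto simp: ennreal_mult'[symmetric] ennreal_le_1 ennreal_neg)
    qed simp
  qed
  also have "\<dots> = 1" by (simp add: P.emeasure_space_1)
  finally have "(\<integral>\<^sup>+ x. ennreal (- ln (enn2real (r x))) \<partial>Q) \<noteq> \<infinity>"
    by (auto simp: top_unique)
  then have "ext_exp Q (\<lambda>x. ln (enn2real (r x))) \<noteq> -\<infinity>"
    by (intro ext_exp_neq_minf) simp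
  then show ?thesis
    using AC unfolding KL_def r_def by simp
qed (simp add: KL_def)

lemma AE_RN_deriv_pos:
  assumes P: "prob_space P" and Q: "prob_space Q" and S: "sets Q = sets P"
    and AC: "absolutely_continuous P Q"
  shows "AE x in Q. 0 < enn2real (RN_deriv P Q x)"
proof -
  interpret P: prob_space P by (rule P)
  interpret Q: prob_space Q by (rule Q)
  have "AE x in Q. RN_deriv P Q x \<noteq> \<infinity>"
    using absolutely_continuous_AE[OF S AC P.RN_deriv_finite[OF Q.sigma_finite_measure_axioms AC S]] .
  moreover have "AE x in density P (RN_deriv P Q). RN_deriv P Q x \<noteq> 0"
    by (subst AE_density) auto
  then have "AE x in Q. RN_deriv P Q x \<noteq> 0"
    unfolding P.density_RN_deriv[OF AC S] .
  ultimately show ?thesis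
    by eventually_elim (auto simp: enn2real_positive_iff top.not_eq_extremum zero_less_iff_neq_zero)
qed

lemma nn_integral_divide_RN_deriv_le:
  assumes P: "prob_space P" and S: "sets Q = sets P" and AC: "absolutely_continuous P Q"
    and h: "h \<in> borel_measurable P" "\<And>x. h x \<ge> 0"
  shows "(\<integral>\<^sup>+ x. ennreal (h x / enn2real (RN_deriv P Q x)) \<partial>Q) \<le> (\<integral>\<^sup>+ x. ennreal (h x) \<partial>P)"
proof -
  interpret P: prob_space P by (rule P)
  define r where "r = RN_deriv P Q"
  have Q: "density P r = Q" unfolding r_def by (rule P.density_RN_deriv[OF AC S])
  have "(\<integral>\<^sup>+ x. ennreal (h x / enn2real (r x)) \<partial>Q) = (\<integral>\<^sup>+ x. r x * ennreal (h x / enn2real (r x)) \<partial>P)"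
    unfolding Q[symmetric] using h(1) by (intro nn_integral_density) (auto simp: r_def)
  also have "\<dots> \<le> (\<integral>\<^sup>+ x. ennreal (h x) \<partial>P)"
  proof (intro nn_integral_mono)
    fix x
    show "r x * ennreal (h x / enn2real (r x)) \<le> ennreal (h x)"
    proof (cases "r x")
      case (real t)
      then show ?thesis
        using h(2)[of x] by (cases "t = 0") (simp_all add: ennreal_mult'[symmetric])
    qed simp
  qed
  finally show ?thesis by (simp add: r_def)
qed

lemma abs_exp_mult_self_le:
  fixes y B :: real
  assumes "y \<le> B"
  shows "\<bar>exp y * y\<bar> \<le> exp B * \<bar>B\<bar> + 1"
proof (cases "y \<ge> 0")
  case True
  then have "exp y * y \<le> exp B * \<bar>B\<bar>"
    using assms by (intro mult_mono) auto
  with True show ?thesis by simp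
next
  case False
  have "exp y * (- y) \<le> exp y * exp (- y)"
    using exp_ge_add_one_self[of "- y"] by (intro mult_left_mono) auto
  then have "\<bar>exp y * y\<bar> \<le> 1"
    using False by (simp add: exp_minus_inverse abs_if mult_less_0_iff)
  moreover have "0 \<le> exp B * \<bar>B\<bar>" by simp
  ultimately show ?thesis by linarith
qed

definition gibbs_measure :: "'a measure \<Rightarrow> ('a \<Rightarrow> real) \<Rightarrow> 'a measure" where
  "gibbs_measure P f = density P (\<lambda>x. ennreal (exp (f x) / (\<integral>y. exp (f y) \<partial>P)))"

lemma sets_gibbs_measure [simp]: "sets (gibbs_measure P f) = sets P"
  by (simp add: gibbs_measure_def)

context
  fixes P :: "'a measure" and f :: "'a \<Rightarrow> real" and B :: real
  assumes P: "prob_space P" and f_measurable[measurable]: "f \<in> borel_measurable P"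
    and f_bounded: "\<And>x. f x \<le> B"
begin

interpretation P: prob_space P by (rule P)

lemma integrable_exp_bounded_above: "integrable P (\<lambda>x. exp (f x))"
  using f_bounded by (intro P.integrable_const_bound[where B = "exp B"]) auto

lemma integral_exp_pos: "(\<integral>x. exp (f x) \<partial>P) > 0"
proof -
  have "(\<integral>x. exp (f x) \<partial>P) \<noteq> 0"
    using integral_nonneg_eq_0_iff_AE[OF integrable_exp_bounded_above] P.AE_False by auto
  moreover have "(\<integral>x. exp (f x) \<partial>P) \<ge> 0"
    by (intro integral_nonneg_AE) auto
  ultimately show ?thesis by linarith
qed

text \<open>Gibbs' inequality \<open>E\<^sub>Q f - KL(Q\<parallel>P) \<le> ln E\<^sub>P e\<^sup>f\<close>, from \<open>ln u \<le> u - 1\<close>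
  applied to the ratio \<open>u\<close> of the Gibbs density \<open>e\<^sup>f / E\<^sub>P e\<^sup>f\<close> and \<open>dQ/dP\<close>.\<close>

lemma gibbs_integral_le:
  assumes Q: "prob_space Q" and S: "sets Q = sets P" and AC: "absolutely_continuous P Q"
    and iF: "integrable Q f" and iG: "integrable Q (\<lambda>x. ln (enn2real (RN_deriv P Q x)))"
  shows "(\<integral>x. f x \<partial>Q) - (\<integral>x. ln (enn2real (RN_deriv P Q x)) \<partial>Q) \<le> ln (\<integral>x. exp (f x) \<partial>P)"
proof -
  interpret Q: prob_space Q by (rule Q)
  define c where "c = (\<integral>x. exp (f x) \<partial>P)"
  have c: "c > 0" unfolding c_def by (rule integral_exp_pos)
  define u where "u x = exp (f x) / c / enn2real (RN_deriv P Q x)" for x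
  have um: "u \<in> borel_measurable Q"
    unfolding u_def by (simp add: measurable_cong_sets[OF S refl])
  have u0: "u x \<ge> 0" for x using c by (simp add: u_def)
  have "(\<integral>\<^sup>+ x. ennreal (u x) \<partial>Q) \<le> (\<integral>\<^sup>+ x. ennreal (exp (f x) / c) \<partial>P)"
    unfolding u_def using c by (intro nn_integral_divide_RN_deriv_le[OF P S AC]) auto
  also have "\<dots> = ennreal (\<integral>x. exp (f x) / c \<partial>P)"
    using integrable_exp_bounded_above c by (intro nn_integral_eq_integral) auto
  also have "(\<integral>x. exp (f x) / c \<partial>P) = 1" using c by (simp add: c_def)
  finally have nn: "(\<integral>\<^sup>+ x. ennreal (u x) \<partial>Q) \<le> 1" by simp
  then have iu: "integrable Q u"
    using u0 um by (intro integrableI_nonneg) (auto simp: le_less_trans)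
  have "(\<integral>x. u x \<partial>Q) = enn2real (\<integral>\<^sup>+ x. ennreal (u x) \<partial>Q)"
    using um u0 by (intro integral_eq_nn_integral) auto
  also have "\<dots> \<le> 1"
    using nn by (metis enn2real_1 enn2real_mono ennreal_one_neq_top top.not_eq_extremum)
  finally have Iu: "(\<integral>x. u x \<partial>Q) \<le> 1" .
  have "AE x in Q. f x - ln (enn2real (RN_deriv P Q x)) - ln c \<le> u x - 1"
    using AE_RN_deriv_pos[OF P Q S AC]
  proof eventually_elim
    case (elim x)
    then show ?case
      using ln_le_minus_one[of "u x"] c by (simp add: u_def ln_div ln_mult)
  qed
  then have "(\<integral>x. f x - ln (enn2real (RN_deriv P Q x)) - ln c \<partial>Q) \<le> (\<integral>x. u x - 1 \<partial>Q)"
    using iF iG iu by (intro integral_mono_AE) auto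
  then show ?thesis
    using iF iG iu Iu by (simp add: Q.prob_space c_def)
qed

lemma ext_exp_minus_KL_real:
  assumes Q: "prob_space Q" and S: "sets Q = sets P"
    and e: "ext_exp Q f - KL Q P = ereal e"
  shows "integrable Q f" "absolutely_continuous P Q"
    "integrable Q (\<lambda>x. ln (enn2real (RN_deriv P Q x)))"
    "e = integral\<^sup>L Q f - (\<integral>x. ln (enn2real (RN_deriv P Q x)) \<partial>Q)"
proof -
  obtain a b where a: "ext_exp Q f = ereal a" and b: "KL Q P = ereal b"
    using e ext_exp_less_top[OF Q f_bounded] KL_neq_minf[OF P S]
    by (cases "ext_exp Q f"; cases "KL Q P") auto
  then show AC: "absolutely_continuous P Q" by (auto simp: KL_def split: if_splits)
  show iF: "integrable Q f"
    using a by (intro integrable_if_ext_exp_real) (auto simp: measurable_cong_sets[OF S refl])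
  have KLe: "KL Q P = ext_exp Q (\<lambda>x. ln (enn2real (RN_deriv P Q x)))" using AC by (simp add: KL_def)
  show iG: "integrable Q (\<lambda>x. ln (enn2real (RN_deriv P Q x)))"
    using b unfolding KLe by (intro integrable_if_ext_exp_real) (auto simp: measurable_cong_sets[OF S refl])
  show "e = integral\<^sup>L Q f - (\<integral>x. ln (enn2real (RN_deriv P Q x)) \<partial>Q)"
    using e unfolding KLe ext_exp_eq_integral[OF iF] ext_exp_eq_integral[OF iG] by simp
qed

lemma gibbs_variational_le:
  assumes Q: "prob_space Q" and S: "sets Q = sets P"
  shows "ext_exp Q f - KL Q P \<le> ereal (ln (\<integral>x. exp (f x) \<partial>P))"
proof (cases "ext_exp Q f - KL Q P")
  case (real e)
  with ext_exp_minus_KL_real[OF Q S real] gibbs_integral_le[OF Q S] show ?thesis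
    by simp
next
  case PInf
  then show ?thesis
    using ext_exp_less_top[OF Q f_bounded] KL_neq_minf[OF P S]
    by (cases "ext_exp Q f"; cases "KL Q P") auto
qed simp

lemma prob_space_gibbs_measure: "prob_space (gibbs_measure P f)"
proof (rule prob_spaceI)
  have "emeasure (gibbs_measure P f) (space P)
          = (\<integral>\<^sup>+ x. ennreal (exp (f x) / (\<integral>y. exp (f y) \<partial>P)) \<partial>P)"
    unfolding gibbs_measure_def by (subst emeasure_density) (auto intro!: nn_integral_cong)
  also have "\<dots> = ennreal (\<integral>x. exp (f x) / (\<integral>y. exp (f y) \<partial>P) \<partial>P)"
    using integrable_exp_bounded_above integral_exp_pos by (intro nn_integral_eq_integral) auto
  also have "\<dots> = 1" using integral_exp_pos by simp
  finally show "emeasure (gibbs_measure P f) (space (gibbs_measure P f)) = 1"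
    by (simp add: gibbs_measure_def)
qed

lemma integrable_gibbs_measure: "integrable (gibbs_measure P f) f"
proof -
  define c where "c = (\<integral>y. exp (f y) \<partial>P)"
  have c: "c > 0" unfolding c_def by (rule integral_exp_pos)
  have "norm ((exp (f x) / c) *\<^sub>R f x) \<le> (exp B * \<bar>B\<bar> + 1) / c" for x
    using c abs_exp_mult_self_le[OF f_bounded] by (simp add: abs_mult divide_right_mono)
  then have "integrable P (\<lambda>x. (exp (f x) / c) *\<^sub>R f x)"
    by (intro P.integrable_const_bound[where B = "(exp B * \<bar>B\<bar> + 1) / c"]) auto
  then show ?thesis
    unfolding gibbs_measure_def c_def[symmetric] using c by (subst integrable_density) auto
qed

lemma ln_RN_deriv_gibbs_measure:
  "absolutely_continuous P (gibbs_measure P f)"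
  "AE x in gibbs_measure P f. ln (enn2real (RN_deriv P (gibbs_measure P f) x)) = f x - ln (\<integral>y. exp (f y) \<partial>P)"
proof -
  define c where "c = (\<integral>y. exp (f y) \<partial>P)"
  have c: "c > 0" unfolding c_def by (rule integral_exp_pos)
  show AC: "absolutely_continuous P (gibbs_measure P f)"
    unfolding gibbs_measure_def by (intro absolutely_continuousI_density) simp
  have "AE x in P. ennreal (exp (f x) / c) = RN_deriv P (gibbs_measure P f) x"
    by (rule P.RN_deriv_unique) (auto simp: gibbs_measure_def c_def)
  then have "AE x in gibbs_measure P f. ennreal (exp (f x) / c) = RN_deriv P (gibbs_measure P f) x"
    by (rule absolutely_continuous_AE[OF sets_gibbs_measure AC])
  then show "AE x in gibbs_measure P f. ln (enn2real (RN_deriv P (gibbs_measure P f) x)) = f x - ln c"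
  proof eventually_elim
    case (elim x)
    then have "enn2real (RN_deriv P (gibbs_measure P f) x) = exp (f x) / c"
      using c by (metis enn2real_ennreal divide_nonneg_pos exp_ge_zero)
    then show ?case using c by (simp add: ln_div)
  qed
qed

lemma gibbs_measure_attains:
  "ext_exp (gibbs_measure P f) f - KL (gibbs_measure P f) P = ereal (ln (\<integral>x. exp (f x) \<partial>P))"
proof -
  interpret Q: prob_space "gibbs_measure P f" by (rule prob_space_gibbs_measure)
  have "KL (gibbs_measure P f) P = ext_exp (gibbs_measure P f) (\<lambda>x. f x - ln (\<integral>y. exp (f y) \<partial>P))"
    using ln_RN_deriv_gibbs_measure by (simp add: KL_def ext_exp_cong_AE)
  then show ?thesis
    using integrable_gibbs_measure by (simp add: ext_exp_eq_integral Q.prob_space)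
qed

end

lemma measurable_PiM_continuous:
  fixes F :: "('i::finite \<Rightarrow> 'a::euclidean_space) \<Rightarrow> 'b::topological_space"
  assumes c: "continuous_on UNIV F" and S: "\<And>i. sets (M i) = sets borel"
  shows "F \<in> measurable (PiM UNIV M) borel"
proof -
  have "F \<in> borel_measurable (borel :: ('i \<Rightarrow> 'a) measure)" by (rule borel_measurable_continuous_onI[OF c])
  hence "F \<in> measurable (PiM UNIV (\<lambda>_. borel :: 'a measure)) borel"
    using sets_PiM_equal_borel measurable_cong_sets by blast
  moreover have "sets (PiM UNIV M) = sets (PiM UNIV (\<lambda>_. borel :: 'a measure))"
    using S by (intro sets_PiM_cong) auto
  ultimately show ?thesis using measurable_cong_sets by blast
qed

lemma PiM_distr_componentwise:
  assumes fin: "finite I" and M: "\<And>i. prob_space (M i)" and f: "\<And>i. f i \<in> measurable (M i) (N i)"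
  shows "PiM I (\<lambda>i. distr (M i) (N i) (f i)) = distr (PiM I M) (PiM I N) (\<lambda>x. \<lambda>i\<in>I. f i (x i))"
proof -
  interpret MM: product_prob_space M I by (rule product_prob_spaceI[OF M])
  have D: "prob_space (distr (M i) (N i) (f i))" for i
    using M f by (intro prob_space.prob_space_distr) auto
  interpret DD: product_prob_space "\<lambda>i. distr (M i) (N i) (f i)" I by (rule product_prob_spaceI[OF D])
  have mF: "(\<lambda>x. \<lambda>i\<in>I. f i (x i)) \<in> measurable (PiM I M) (PiM I N)"
    using f by (intro measurable_restrict) (auto intro: measurable_compose[OF measurable_component_singleton])
  show ?thesis
  proof (rule DD.PiM_eqI[OF fin, symmetric])
    show "sets (distr (PiM I M) (PiM I N) (\<lambda>x. \<lambda>i\<in>I. f i (x i))) = sets (PiM I (\<lambda>i. distr (M i) (N i) (f i)))"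
      by (simp add: sets_PiM_cong[OF refl sets_distr])
    fix A assume A: "\<And>i. i \<in> I \<Longrightarrow> A i \<in> sets (distr (M i) (N i) (f i))"
    hence AN: "\<And>i. i \<in> I \<Longrightarrow> A i \<in> sets (N i)" by simp
    have "Pi\<^sub>E I A \<in> sets (PiM I N)" using AN fin by (intro sets_PiM_I_finite) auto
    hence "emeasure (distr (PiM I M) (PiM I N) (\<lambda>x. \<lambda>i\<in>I. f i (x i))) (Pi\<^sub>E I A)
        = emeasure (PiM I M) ((\<lambda>x. \<lambda>i\<in>I. f i (x i)) -` Pi\<^sub>E I A \<inter> space (PiM I M))"
      by (rule emeasure_distr[OF mF])
    also have "(\<lambda>x. \<lambda>i\<in>I. f i (x i)) -` Pi\<^sub>E I A \<inter> space (PiM I M) = Pi\<^sub>E I (\<lambda>i. f i -` A i \<inter> space (M i))"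
      by (auto simp: space_PiM PiE_iff)
    also have "emeasure (PiM I M) \<dots> = (\<Prod>i\<in>I. emeasure (M i) (f i -` A i \<inter> space (M i)))"
      using AN f fin by (intro MM.emeasure_PiM) (auto intro: measurable_sets)
    also have "\<dots> = (\<Prod>i\<in>I. emeasure (distr (M i) (N i) (f i)) (A i))"
      using AN f by (intro prod.cong refl) (simp add: emeasure_distr)
    finally show "emeasure (distr (PiM I M) (PiM I N) (\<lambda>x. \<lambda>i\<in>I. f i (x i))) (Pi\<^sub>E I A) = (\<Prod>i\<in>I. emeasure (distr (M i) (N i) (f i)) (A i))" .
  qed
qed

lemma measurable_PiM_PiM_to_pairs:
  fixes g :: "'k \<Rightarrow> 'a measure"
  shows "(\<lambda>x. \<lambda>(p, k). x k p) \<in> measurable (PiM UNIV (\<lambda>k. PiM (UNIV :: 'p set) (\<lambda>_. g k))) (PiM UNIV (\<lambda>(p, k). g k))"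
proof (rule measurable_PiM_single')
  fix i :: "'p \<times> 'k"
  show "(\<lambda>x. (\<lambda>(p, k). x k p) i) \<in> measurable (PiM UNIV (\<lambda>k. PiM UNIV (\<lambda>_. g k))) ((\<lambda>(p, k). g k) i)"
  proof (cases i)
    case (Pair p k)
    have "(\<lambda>x. x k p) \<in> measurable (PiM UNIV (\<lambda>k. PiM UNIV (\<lambda>_. g k))) (g k)"
      by (rule measurable_compose[OF measurable_component_singleton[of k] measurable_component_singleton[of p]]) auto
    then show ?thesis by (simp add: Pair)
  qed
qed (auto simp: space_PiM PiE_iff split: prod.splits)
lemma PiM_pairs_eq_distr_PiM_PiM:
  fixes g :: "'k::finite \<Rightarrow> 'a measure"
  assumes G: "\<And>k. prob_space (g k)"
  defines "K \<equiv> PiM UNIV (\<lambda>k. PiM (UNIV :: 'p::finite set) (\<lambda>_. g k))"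
  shows "PiM UNIV (\<lambda>(p, k). g k) = distr K (PiM UNIV (\<lambda>(p, k). g k)) (\<lambda>x. \<lambda>(p, k). x k p)"
proof -
  interpret PK: product_prob_space "\<lambda>(p, k). g k" "UNIV :: ('p \<times> 'k) set"
    by (rule product_prob_spaceI) (auto simp: G split: prod.split)
  interpret K: product_prob_space "\<lambda>k. PiM (UNIV :: 'p set) (\<lambda>_. g k)" "UNIV :: 'k set"
    by (rule product_prob_spaceI) (simp add: G prob_space_PiM)
  show ?thesis
  proof (rule PK.PiM_eqI[OF finite_class.finite_UNIV, symmetric])
    fix A :: "'p \<times> 'k \<Rightarrow> 'a set"
    assume "\<And>i. i \<in> UNIV \<Longrightarrow> A i \<in> sets (case i of (p, k) \<Rightarrow> g k)"
    then have A: "A (p, k) \<in> sets (g k)" for p k by force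
    have inner: "emeasure (PiM UNIV (\<lambda>_. g k)) (\<Pi>\<^sub>E p\<in>UNIV. A (p, k)) = (\<Prod>p\<in>UNIV. emeasure (g k) (A (p, k)))"
      for k
    proof -
      interpret product_prob_space "\<lambda>_::'p. g k" "UNIV :: 'p set" by (rule product_prob_spaceI) (rule G)
      show ?thesis using A by (intro emeasure_PiM) auto
    qed
    have "(\<lambda>x. \<lambda>(p, k). x k p) -` Pi\<^sub>E UNIV A \<inter> space K = (\<Pi>\<^sub>E k\<in>UNIV. \<Pi>\<^sub>E p\<in>UNIV. A (p, k))"
      using A[THEN sets.sets_into_space] by (auto simp: K_def space_PiM PiE_iff split: prod.splits; blast)
    then have "emeasure (distr K (PiM UNIV (\<lambda>(p, k). g k)) (\<lambda>x. \<lambda>(p, k). x k p)) (Pi\<^sub>E UNIV A)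
                 = emeasure K (\<Pi>\<^sub>E k\<in>UNIV. \<Pi>\<^sub>E p\<in>UNIV. A (p, k))"
      using A unfolding K_def
      by (subst emeasure_distr) (auto intro!: measurable_PiM_PiM_to_pairs sets_PiM_I_finite)
    also have "\<dots> = (\<Prod>k\<in>UNIV. \<Prod>p\<in>UNIV. emeasure (g k) (A (p, k)))"
      using A unfolding K_def by (subst K.emeasure_PiM) (auto intro!: sets_PiM_I_finite simp: inner)
    also have "\<dots> = (\<Prod>i\<in>UNIV. emeasure (case i of (p, k) \<Rightarrow> g k) (A i))"
      by (subst prod.swap) (simp add: prod.cartesian_product case_prod_beta)
    finally show "emeasure (distr K (PiM UNIV (\<lambda>(p, k). g k)) (\<lambda>x. \<lambda>(p, k). x k p)) (Pi\<^sub>E UNIV A)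
                    = (\<Prod>i\<in>UNIV. emeasure (case i of (p, k) \<Rightarrow> g k) (A i))" .
  qed simp
qed

lemma indicator_PiE_eq_prod:
  assumes "finite I" "x \<in> extensional I"
  shows "indicator (Pi\<^sub>E I A) x = (\<Prod>i\<in>I. indicator (A i) (x i) :: ennreal)"
proof (cases "x \<in> Pi\<^sub>E I A")
  case True thus ?thesis by (auto simp: PiE_iff intro!: prod.neutral)
next
  case False
  then obtain i where i: "i \<in> I" "x i \<notin> A i" using assms(2) by (auto simp: PiE_iff)
  have "(\<Prod>i\<in>I. indicator (A i) (x i) :: ennreal) = 0"
    by (rule prod_zero[OF assms(1)]) (use i in \<open>auto intro!: bexI[of _ i]\<close>)
  thus ?thesis using False by simp
qed

lemma PiM_density_prod:
  assumes fin: "finite I" and M: "\<And>i. prob_space (M i)" and r[measurable]: "\<And>i. r i \<in> borel_measurable (M i)"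
    and D: "\<And>i. prob_space (density (M i) (r i))"
  shows "PiM I (\<lambda>i. density (M i) (r i)) = density (PiM I M) (\<lambda>x. \<Prod>i\<in>I. r i (x i))"
proof -
  interpret MM: product_prob_space M I by (rule product_prob_spaceI[OF M])
  interpret DD: product_prob_space "\<lambda>i. density (M i) (r i)" I by (rule product_prob_spaceI[OF D])
  have Rm: "(\<lambda>x. \<Prod>i\<in>I. r i (x i)) \<in> borel_measurable (PiM I M)"
  proof (intro borel_measurable_prod_ennreal)
    fix i assume "i \<in> I"
    thus "(\<lambda>x. r i (x i)) \<in> borel_measurable (PiM I M)"
      by (intro measurable_compose[OF measurable_component_singleton[of i I M] r[of i]])
  qed
  show ?thesis
  proof (rule DD.PiM_eqI[OF fin, symmetric])
    show "sets (density (PiM I M) (\<lambda>x. \<Prod>i\<in>I. r i (x i))) = sets (PiM I (\<lambda>i. density (M i) (r i)))"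
      by (simp add: sets_PiM_cong[OF refl sets_density])
    fix A assume A: "\<And>i. i \<in> I \<Longrightarrow> A i \<in> sets (density (M i) (r i))"
    hence AM: "\<And>i. i \<in> I \<Longrightarrow> A i \<in> sets (M i)" by simp
    have PA: "Pi\<^sub>E I A \<in> sets (PiM I M)" using AM fin by (intro sets_PiM_I_finite) auto
    have "emeasure (density (PiM I M) (\<lambda>x. \<Prod>i\<in>I. r i (x i))) (Pi\<^sub>E I A)
        = (\<integral>\<^sup>+ x. (\<Prod>i\<in>I. r i (x i)) * indicator (Pi\<^sub>E I A) x \<partial>PiM I M)"
      by (rule emeasure_density[OF Rm PA])
    also have "\<dots> = (\<integral>\<^sup>+ x. (\<Prod>i\<in>I. r i (x i) * indicator (A i) (x i)) \<partial>PiM I M)"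
    proof (intro nn_integral_cong)
      fix x assume "x \<in> space (PiM I M)"
      hence "x \<in> extensional I" by (auto simp: space_PiM PiE_def)
      thus "(\<Prod>i\<in>I. r i (x i)) * indicator (Pi\<^sub>E I A) x = (\<Prod>i\<in>I. r i (x i) * indicator (A i) (x i))"
        using fin by (simp add: indicator_PiE_eq_prod prod.distrib)
    qed
    also have "\<dots> = (\<Prod>i\<in>I. \<integral>\<^sup>+ y. r i y * indicator (A i) y \<partial>M i)"
      using AM by (intro MM.product_nn_integral_prod[OF fin]) auto
    also have "\<dots> = (\<Prod>i\<in>I. emeasure (density (M i) (r i)) (A i))"
      using AM by (intro prod.cong refl) (simp add: emeasure_density)
    finally show "emeasure (density (PiM I M) (\<lambda>x. \<Prod>i\<in>I. r i (x i))) (Pi\<^sub>E I A) = (\<Prod>i\<in>I. emeasure (density (M i) (r i)) (A i))" .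
  qed
qed

lemma is_dist_prob_space: "is_dist M \<Longrightarrow> prob_space M" and is_dist_sets: "is_dist M \<Longrightarrow> sets M = sets borel"
  by (auto simp: is_dist_def)

lemma is_dist_measurable_iff: "is_dist M \<Longrightarrow> measurable M N = measurable borel N"
  by (intro measurable_cong_sets) (simp_all add: is_dist_def)

lemma measurable_vec_lambda_PiM:
  assumes "sets g = sets borel"
  shows "(\<lambda>f. \<chi> p. f p) \<in> measurable (PiM (UNIV::'p::finite set) (\<lambda>_. g)) (borel :: (real^'p) measure)"
  by (rule measurable_PiM_continuous) (auto simp: assms intro!: continuous_intros)

lemma measurable_matrix_of_pairs_PiM:
  assumes "\<And>k. sets (gs k) = sets borel"
  shows "(\<lambda>f. \<chi> p k. f (p, k)) \<in> measurable (PiM (UNIV::('p::finite \<times> 'k::finite) set) (\<lambda>(p,k). gs k)) (borel :: (real^'k^'p) measure)"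
  by (rule measurable_PiM_continuous) (auto simp: assms split: prod.split intro!: continuous_intros)

lemma measurable_matrix_of_cols_PiM:
  assumes "\<And>k. sets (qs k) = sets borel"
  shows "(\<lambda>f. \<chi> p k. f k $ p) \<in> measurable (PiM (UNIV::'k::finite set) qs) (borel :: (real^'k^'p::finite) measure)"
  by (rule measurable_PiM_continuous) (auto simp: assms intro!: continuous_intros)

lemma is_dist_prior_vec:
  assumes "is_dist g"
  shows "is_dist (prior_vec g :: (real^'p::finite) measure)"
proof -
  have "prob_space (PiM (UNIV::'p set) (\<lambda>_. g))" using assms by (intro prob_space_PiM) (simp add: is_dist_prob_space)
  hence "prob_space (prior_vec g :: (real^'p) measure)"
    unfolding prior_vec_def by (rule prob_space.prob_space_distr) (rule measurable_vec_lambda_PiM[OF is_dist_sets[OF assms]])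
  thus ?thesis by (simp add: is_dist_def prior_vec_def)
qed

lemma is_dist_prod_cols:
  assumes "\<And>k. is_dist (qs k)"
  shows "is_dist (prod_cols qs :: (real^'k::finite^'p::finite) measure)"
proof -
  have "prob_space (PiM (UNIV::'k set) qs)" using assms by (intro prob_space_PiM) (simp add: is_dist_prob_space)
  hence "prob_space (prod_cols qs :: (real^'k^'p) measure)"
    unfolding prod_cols_def by (rule prob_space.prob_space_distr) (rule measurable_matrix_of_cols_PiM, simp add: is_dist_sets[OF assms])
  thus ?thesis by (simp add: is_dist_def prod_cols_def)
qed

lemma is_dist_prior_mat:
  assumes "\<And>k. is_dist (gs k)"
  shows "is_dist (prior_mat gs :: (real^'k::finite^'p::finite) measure)"
proof -
  have "prob_space (PiM (UNIV::('p \<times> 'k) set) (\<lambda>(p,k). gs k))" using assms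
    by (intro prob_space_PiM) (auto simp: is_dist_prob_space split: prod.split)
  hence "prob_space (prior_mat gs :: (real^'k^'p) measure)"
    unfolding prior_mat_def by (rule prob_space.prob_space_distr) (rule measurable_matrix_of_pairs_PiM, simp add: is_dist_sets[OF assms])
  thus ?thesis by (simp add: is_dist_def prior_mat_def)
qed

lemma prior_mat_eq_prod_cols:
  assumes G: "\<And>k. is_dist (gs k)"
  shows "(prior_mat gs :: (real^'k::finite^'p::finite) measure) = prod_cols (\<lambda>k. prior_vec (gs k))"
proof -
  let ?K = "PiM UNIV (\<lambda>k. PiM (UNIV :: 'p set) (\<lambda>_. gs k))"
  let ?vecs = "\<lambda>x. \<lambda>k\<in>UNIV. (\<chi> p. x k p) :: real^'p"
  have Gp: "prob_space (gs k)" and Gs: "sets (gs k) = sets borel" for k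
    using G by (auto simp: is_dist_def)
  have "(\<lambda>x. \<chi> p. x k p) \<in> measurable ?K (borel :: (real^'p) measure)" for k
    by (rule measurable_compose[OF measurable_component_singleton[of k] measurable_vec_lambda_PiM[OF Gs]])
       simp
  then have vecs: "?vecs \<in> measurable ?K (PiM UNIV (\<lambda>_. borel))"
    by (intro measurable_restrict)
  have "prior_mat gs = distr (distr ?K (PiM UNIV (\<lambda>(p, k). gs k)) (\<lambda>x. \<lambda>(p, k). x k p)) borel
                         (\<lambda>f. \<chi> p k. f (p, k))"
    unfolding prior_mat_def by (subst PiM_pairs_eq_distr_PiM_PiM[OF Gp]) simp
  also have "\<dots> = distr ?K borel ((\<lambda>f. \<chi> p k. f (p, k)) \<circ> (\<lambda>x. \<lambda>(p, k). x k p))"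
    by (intro distr_distr measurable_matrix_of_pairs_PiM Gs measurable_PiM_PiM_to_pairs)
  also have "\<dots> = distr ?K borel ((\<lambda>f. \<chi> p k. f k $ p) \<circ> ?vecs)"
    by (intro distr_cong) (auto simp: comp_def)
  also have "\<dots> = distr (distr ?K (PiM UNIV (\<lambda>_. borel)) ?vecs) borel (\<lambda>f. \<chi> p k. f k $ p)"
    by (intro distr_distr[symmetric] measurable_matrix_of_cols_PiM vecs) simp
  also have "distr ?K (PiM UNIV (\<lambda>_. borel)) ?vecs = PiM UNIV (\<lambda>k. prior_vec (gs k))"
    unfolding prior_vec_def
    by (rule PiM_distr_componentwise[symmetric]) (auto intro: prob_space_PiM Gp measurable_vec_lambda_PiM[OF Gs])
  finally show ?thesis by (simp add: prod_cols_def)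
qed

lemma column_matrix_of_cols: "column k (\<chi> p k. f k $ p) = f k"
  by (simp add: column_def vec_eq_iff)

lemma borel_measurable_column: "(\<lambda>L. column k L) \<in> borel_measurable (borel :: (real^'k::finite^'p::finite) measure)"
  unfolding column_def by (intro borel_measurable_continuous_onI continuous_intros)

lemma PiM_component_integral:
  fixes qs :: "'k::finite \<Rightarrow> 'a measure" and h :: "'a \<Rightarrow> real"
  assumes Q: "\<And>k. prob_space (qs k)" and H: "integrable (qs k) h"
  shows "integrable (PiM UNIV qs) (\<lambda>x. h (x k))" "(\<integral>x. h (x k) \<partial>PiM UNIV qs) = integral\<^sup>L (qs k) h"
proof -
  interpret QQ: product_prob_space qs UNIV by (rule product_prob_spaceI[OF Q])
  have e: "distr (PiM UNIV qs) (qs k) (\<lambda>\<omega>. \<omega> k) = qs k" by (rule QQ.PiM_component) simp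
  have hm: "h \<in> borel_measurable (qs k)" using H by simp
  have "integrable (distr (PiM UNIV qs) (qs k) (\<lambda>\<omega>. \<omega> k)) h" using H e by simp
  thus "integrable (PiM UNIV qs) (\<lambda>x. h (x k))"
    by (subst (asm) integrable_distr_eq[OF measurable_component_singleton[of k UNIV qs, OF UNIV_I] hm]) auto
  have "integral\<^sup>L (qs k) h = integral\<^sup>L (distr (PiM UNIV qs) (qs k) (\<lambda>\<omega>. \<omega> k)) h" using e by simp
  also have "\<dots> = (\<integral>x. h (x k) \<partial>PiM UNIV qs)" by (rule integral_distr[OF measurable_component_singleton[of k UNIV qs, OF UNIV_I] hm])
  finally show "(\<integral>x. h (x k) \<partial>PiM UNIV qs) = integral\<^sup>L (qs k) h" by simp
qed

lemma prod_cols_integral_sum: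
  fixes qs :: "'k::finite \<Rightarrow> (real^'p::finite) measure" and h :: "'k \<Rightarrow> real^'p \<Rightarrow> real"
  assumes Q: "\<And>k. is_dist (qs k)" and H: "\<And>k. integrable (qs k) (h k)"
  shows "integrable (prod_cols qs) (\<lambda>L. \<Sum>k\<in>UNIV. h k (column k L))"
    "integral\<^sup>L (prod_cols qs) (\<lambda>L. \<Sum>k\<in>UNIV. h k (column k L)) = (\<Sum>k\<in>UNIV. integral\<^sup>L (qs k) (h k))"
proof -
  have Qp: "\<And>k. prob_space (qs k)" and Qs: "\<And>k. sets (qs k) = sets borel" using Q by (auto simp: is_dist_def)
  have phim: "(\<lambda>f. \<chi> p k. f k $ p) \<in> measurable (PiM (UNIV::'k set) qs) (borel :: (real^'k^'p) measure)"
    by (rule measurable_matrix_of_cols_PiM[OF Qs])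
  have hm: "h k \<in> borel_measurable borel" for k
    using H[of k] measurable_cong_sets[OF Qs[of k] refl] by auto
  have Fm: "(\<lambda>L. \<Sum>k\<in>UNIV. h k (column k L)) \<in> borel_measurable (borel :: (real^'k^'p) measure)"
    by (intro borel_measurable_sum measurable_compose[OF borel_measurable_column hm])
  have comp: "(\<lambda>x. \<Sum>k\<in>UNIV. h k (column k ((\<lambda>f. \<chi> p k. f k $ p) x))) = (\<lambda>x. \<Sum>k\<in>UNIV. h k (x k))"
    by (simp add: column_matrix_of_cols)
  have iP: "integrable (PiM UNIV qs) (\<lambda>x. \<Sum>k\<in>UNIV. h k (x k))"
    by (rule Bochner_Integration.integrable_sum) (rule PiM_component_integral(1)[OF Qp H])
  show "integrable (prod_cols qs) (\<lambda>L. \<Sum>k\<in>UNIV. h k (column k L))"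
    unfolding prod_cols_def integrable_distr_eq[OF phim Fm] comp by (rule iP)
  have "integral\<^sup>L (prod_cols qs) (\<lambda>L. \<Sum>k\<in>UNIV. h k (column k L)) = (\<integral>x. (\<Sum>k\<in>UNIV. h k (x k)) \<partial>PiM UNIV qs)"
    unfolding prod_cols_def integral_distr[OF phim Fm] comp ..
  also have "\<dots> = (\<Sum>k\<in>UNIV. (\<integral>x. h k (x k) \<partial>PiM UNIV qs))"
    by (rule Bochner_Integration.integral_sum) (rule PiM_component_integral(1)[OF Qp H])
  also have "\<dots> = (\<Sum>k\<in>UNIV. integral\<^sup>L (qs k) (h k))"
    by (rule sum.cong, rule refl, rule PiM_component_integral(2)[OF Qp H])
  finally show "integral\<^sup>L (prod_cols qs) (\<lambda>L. \<Sum>k\<in>UNIV. h k (column k L)) = (\<Sum>k\<in>UNIV. integral\<^sup>L (qs k) (h k))" .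
qed

lemma prod_cols_density:
  fixes P :: "'k::finite \<Rightarrow> (real^'p::finite) measure"
  assumes Pd: "\<And>k. is_dist (P k)" and r: "\<And>k. r k \<in> borel_measurable (P k)"
    and D: "\<And>k. prob_space (density (P k) (r k))"
  shows "prod_cols (\<lambda>k. density (P k) (r k)) = density (prod_cols P) (\<lambda>L. \<Prod>k\<in>UNIV. r k (column k L))"
proof -
  have Pp: "\<And>k. prob_space (P k)" and Ps: "\<And>k. sets (P k) = sets borel" using Pd by (auto simp: is_dist_def)
  have phim: "(\<lambda>f. \<chi> p k. f k $ p) \<in> measurable (PiM (UNIV::'k set) P) (borel :: (real^'k^'p) measure)"
    by (rule measurable_matrix_of_cols_PiM[OF Ps])
  have rm: "r k \<in> borel_measurable borel" for k using r[of k] measurable_cong_sets[OF Ps[of k] refl] by auto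
  have Rm: "(\<lambda>L. \<Prod>k\<in>UNIV. r k (column k L)) \<in> borel_measurable (borel :: (real^'k^'p) measure)"
    by (intro borel_measurable_prod_ennreal measurable_compose[OF borel_measurable_column rm])
  have "prod_cols (\<lambda>k. density (P k) (r k)) = distr (density (PiM UNIV P) (\<lambda>x. \<Prod>k\<in>UNIV. r k (x k))) borel (\<lambda>f. \<chi> p k. f k $ p)"
    unfolding prod_cols_def by (subst PiM_density_prod[OF finite_class.finite_UNIV Pp r D]) (simp add: sets_PiM_cong)
  also have "\<dots> = density (distr (PiM UNIV P) borel (\<lambda>f. \<chi> p k. f k $ p)) (\<lambda>L. \<Prod>k\<in>UNIV. r k (column k L))"
    by (subst density_distr[OF Rm phim]) (simp add: column_matrix_of_cols)
  finally show ?thesis by (simp add: prod_cols_def)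
qed

lemma enn2real_prod: "enn2real (\<Prod>i\<in>I. f i) = (\<Prod>i\<in>I. enn2real (f i))"
  by (induction I rule: infinite_finite_induct) (auto simp: enn2real_mult)

lemma prod_cols_integral_prod:
  fixes qs :: "'k::finite \<Rightarrow> (real^'p::finite) measure" and h :: "'k \<Rightarrow> real^'p \<Rightarrow> real"
  assumes Q: "\<And>k. is_dist (qs k)" and H: "\<And>k. integrable (qs k) (h k)"
  shows "integral\<^sup>L (prod_cols qs) (\<lambda>L. \<Prod>k\<in>UNIV. h k (column k L)) = (\<Prod>k\<in>UNIV. integral\<^sup>L (qs k) (h k))"
proof -
  have Qp: "\<And>k. prob_space (qs k)" and Qs: "\<And>k. sets (qs k) = sets borel" using Q by (auto simp: is_dist_def)
  interpret QQ: product_prob_space qs UNIV by (rule product_prob_spaceI[OF Qp])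
  have phim: "(\<lambda>f. \<chi> p k. f k $ p) \<in> measurable (PiM (UNIV::'k set) qs) (borel :: (real^'k^'p) measure)"
    by (rule measurable_matrix_of_cols_PiM[OF Qs])
  have hm: "h k \<in> borel_measurable borel" for k
    using H[of k] measurable_cong_sets[OF Qs[of k] refl] by auto
  have Fm: "(\<lambda>L. \<Prod>k\<in>UNIV. h k (column k L)) \<in> borel_measurable (borel :: (real^'k^'p) measure)"
    by (intro borel_measurable_prod measurable_compose[OF borel_measurable_column hm])
  have "integral\<^sup>L (prod_cols qs) (\<lambda>L. \<Prod>k\<in>UNIV. h k (column k L)) = (\<integral>x. (\<Prod>k\<in>UNIV. h k (x k)) \<partial>PiM UNIV qs)"
    unfolding prod_cols_def integral_distr[OF phim Fm] by (simp add: column_matrix_of_cols)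
  also have "\<dots> = (\<Prod>k\<in>UNIV. integral\<^sup>L (qs k) (h k))"
    by (rule QQ.product_integral_prod) (auto simp: H)
  finally show ?thesis .
qed

lemma AE_prod_cols:
  fixes qs :: "'k::finite \<Rightarrow> (real^'p::finite) measure"
  assumes qs: "\<And>k. is_dist (qs k)" and AE: "\<And>k. AE \<eta> in qs k. P k \<eta>"
    and Pm: "\<And>k. Measurable.pred borel (P k)"
  shows "AE L in prod_cols qs. \<forall>k. P k (column k L)"
proof -
  have "AE x in PiM UNIV qs. \<forall>k\<in>UNIV. P k (x k)"
    using qs AE by (intro AE_finite_allI AE_PiM_component) (auto simp: is_dist_def)
  moreover have [measurable]: "Measurable.pred borel (\<lambda>L. P k (column k L))" for k
    by (rule measurable_compose[OF borel_measurable_column Pm])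
  ultimately show ?thesis
    unfolding prod_cols_def using measurable_matrix_of_cols_PiM[of qs, OF is_dist_sets[OF qs]]
    by (subst AE_distr_iff) (auto simp: column_matrix_of_cols)
qed

lemma RN_deriv_prod_cols:
  fixes P Q :: "'k::finite \<Rightarrow> (real^'p::finite) measure"
  assumes P: "\<And>k. is_dist (P k)" and Q: "\<And>k. is_dist (Q k)"
    and AC: "\<And>k. absolutely_continuous (P k) (Q k)"
  shows "absolutely_continuous (prod_cols P) (prod_cols Q)"
    "AE L in prod_cols Q. RN_deriv (prod_cols P) (prod_cols Q) L
                             = (\<Prod>k\<in>UNIV. RN_deriv (P k) (Q k) (column k L))"
proof -
  define r where "r k = RN_deriv (P k) (Q k)" for k
  interpret PC: prob_space "prod_cols P" using is_dist_prod_cols[of P, OF P] by (simp add: is_dist_def)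
  have r: "r k \<in> borel_measurable (P k)" for k unfolding r_def by simp
  have "density (P k) (r k) = Q k" for k
    unfolding r_def using P Q AC
    by (intro sigma_finite_measure.density_RN_deriv prob_space_imp_sigma_finite) (auto simp: is_dist_def)
  then have Q_eq: "prod_cols Q = density (prod_cols P) (\<lambda>L. \<Prod>k\<in>UNIV. r k (column k L))"
    using prod_cols_density[of P r, OF P r] Q by (simp add: is_dist_def)
  have R: "(\<lambda>L. \<Prod>k\<in>UNIV. r k (column k L)) \<in> borel_measurable (prod_cols P)"
    using r is_dist_prod_cols[of P, OF P] P
    by (auto simp: is_dist_measurable_iff intro!: borel_measurable_prod_ennreal
        measurable_compose[OF borel_measurable_column])
  show AC': "absolutely_continuous (prod_cols P) (prod_cols Q)"
    unfolding Q_eq by (rule absolutely_continuousI_density[OF R])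
  have RN: "AE L in prod_cols P. (\<Prod>k\<in>UNIV. r k (column k L)) = RN_deriv (prod_cols P) (prod_cols Q) L"
    by (rule PC.RN_deriv_unique[OF R Q_eq[symmetric]])
  have sets: "sets (prod_cols Q) = sets (prod_cols P)"
    using is_dist_prod_cols[of P, OF P] is_dist_prod_cols[of Q, OF Q] by (simp add: is_dist_sets)
  have "AE L in prod_cols Q. (\<Prod>k\<in>UNIV. r k (column k L)) = RN_deriv (prod_cols P) (prod_cols Q) L"
    by (rule absolutely_continuous_AE[OF sets AC' RN])
  then show "AE L in prod_cols Q. RN_deriv (prod_cols P) (prod_cols Q) L
                                    = (\<Prod>k\<in>UNIV. RN_deriv (P k) (Q k) (column k L))"
    by eventually_elim (simp add: r_def)
qed

lemma KL_prod_cols: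
  fixes P Q :: "'k::finite \<Rightarrow> (real^'p::finite) measure"
  assumes P: "\<And>k. is_dist (P k)" and Q: "\<And>k. is_dist (Q k)"
    and AC: "\<And>k. absolutely_continuous (P k) (Q k)"
    and int: "\<And>k. integrable (Q k) (\<lambda>x. ln (enn2real (RN_deriv (P k) (Q k) x)))"
  shows "KL (prod_cols Q) (prod_cols P) = ereal (\<Sum>k\<in>UNIV. \<integral>x. ln (enn2real (RN_deriv (P k) (Q k) x)) \<partial>Q k)"
proof -
  have "AE x in Q k. 0 < enn2real (RN_deriv (P k) (Q k) x)" for k
    using P Q AC by (intro AE_RN_deriv_pos) (auto simp: is_dist_def)
  moreover have [measurable]: "RN_deriv (P k) (Q k) \<in> borel_measurable borel" for k
    using borel_measurable_RN_deriv[of "P k" "Q k"] P by (simp add: is_dist_measurable_iff)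
  ultimately have pos: "AE L in prod_cols Q. \<forall>k. 0 < enn2real (RN_deriv (P k) (Q k) (column k L))"
    by (intro AE_prod_cols Q) auto
  have "AE L in prod_cols Q. ln (enn2real (RN_deriv (prod_cols P) (prod_cols Q) L))
                              = (\<Sum>k\<in>UNIV. ln (enn2real (RN_deriv (P k) (Q k) (column k L))))"
    using RN_deriv_prod_cols(2)[of P Q, OF P Q AC] pos
    by eventually_elim (simp add: enn2real_prod ln_prod less_imp_neq[symmetric])
  then have "KL (prod_cols Q) (prod_cols P)
      = ext_exp (prod_cols Q) (\<lambda>L. \<Sum>k\<in>UNIV. ln (enn2real (RN_deriv (P k) (Q k) (column k L))))"
    using RN_deriv_prod_cols(1)[of P Q, OF P Q AC] by (simp add: KL_def ext_exp_cong_AE)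
  then show ?thesis
    using prod_cols_integral_sum[of Q "\<lambda>k x. ln (enn2real (RN_deriv (P k) (Q k) x))", OF Q int]
    by (simp add: ext_exp_eq_integral)
qed

lemma abs_le_one_plus_sq: "\<bar>x::real\<bar> \<le> 1 + x\<^sup>2"
  using zero_le_power2[of "\<bar>x\<bar> - 1"] by (simp add: power2_diff)

lemma norm_sq_vec: "(norm (x :: 'a::real_normed_vector^'i::finite))\<^sup>2 = (\<Sum>i\<in>UNIV. (norm (x$i))\<^sup>2)"
  unfolding norm_vec_def L2_set_def by (simp add: sum_nonneg)

lemma norm_sq_matrix: "(norm (L :: real^'k::finite^'p::finite))\<^sup>2 = (\<Sum>p\<in>UNIV. \<Sum>k\<in>UNIV. (L$p$k)\<^sup>2)"
  by (simp add: norm_sq_vec)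

context
  fixes q :: "(real^'k::finite^'p::finite) measure"
  assumes q: "fin2 q"
begin

interpretation prob_space q
  using q by (simp add: fin2_def is_dist_def)

lemma fin2_measurable: "f \<in> borel_measurable borel \<Longrightarrow> f \<in> borel_measurable q"
  using q by (simp add: fin2_def is_dist_measurable_iff)

lemma integrable_fin2_sq_nth: "integrable q (\<lambda>L. (L$p$k)\<^sup>2)"
proof (rule Bochner_Integration.integrable_bound)
  show "integrable q (\<lambda>L. (norm L)\<^sup>2)" using q by (simp add: fin2_def)
  show "(\<lambda>L. (L$p$k)\<^sup>2) \<in> borel_measurable q"
    by (intro fin2_measurable borel_measurable_continuous_onI continuous_intros)
  have "(L$p$k)\<^sup>2 \<le> (\<Sum>p\<in>UNIV. \<Sum>k\<in>UNIV. (L$p$k)\<^sup>2)" for L :: "real^'k^'p"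
  proof -
    have "(L$p$k)\<^sup>2 \<le> (\<Sum>k\<in>UNIV. (L$p$k)\<^sup>2)" by (intro member_le_sum) auto
    also have "\<dots> \<le> (\<Sum>p\<in>UNIV. \<Sum>k\<in>UNIV. (L$p$k)\<^sup>2)"
      by (intro member_le_sum[of p UNIV "\<lambda>p. \<Sum>k\<in>UNIV. (L$p$k)\<^sup>2"]) (auto intro: sum_nonneg)
    finally show ?thesis .
  qed
  then show "AE L in q. norm ((L$p$k)\<^sup>2) \<le> norm ((norm L)\<^sup>2)"
    by (auto simp: norm_sq_matrix intro!: AE_I2 order_trans[OF _ abs_ge_self])
qed

lemma integrable_fin2_id: "integrable q (\<lambda>L. L)"
proof (rule Bochner_Integration.integrable_bound)
  show "integrable q (\<lambda>L. 1 + (norm L)\<^sup>2)" using q by (simp add: fin2_def)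
  show "(\<lambda>L. L) \<in> borel_measurable q" by (intro fin2_measurable) measurable
  show "AE L in q. norm L \<le> norm (1 + (norm L)\<^sup>2)"
    using abs_le_one_plus_sq[of "norm _"] by auto
qed

lemma integrable_fin2_nth: "integrable q (\<lambda>L. L$p$k)"
  using integrable_bounded_linear[OF bounded_linear_vec_nth
          integrable_bounded_linear[OF bounded_linear_vec_nth integrable_fin2_id]]
  by simp

lemma Lbar_nth: "Lbar q $ p $ k = (\<integral>L. L$p$k \<partial>q)"
proof -
  have "(\<integral>L. L$p \<partial>q) = Lbar q $ p"
    unfolding Lbar_def by (rule integral_bounded_linear[OF bounded_linear_vec_nth integrable_fin2_id])
  moreover have "(\<integral>L. L$p$k \<partial>q) = (\<integral>L. L$p \<partial>q) $ k"
    by (rule integral_bounded_linear[OF bounded_linear_vec_nth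
          integrable_bounded_linear[OF bounded_linear_vec_nth integrable_fin2_id]])
  ultimately show ?thesis by simp
qed

lemma Vmat_nth: "Vmat q $ p $ k = (\<integral>L. (L$p$k)\<^sup>2 \<partial>q) - (Lbar q $ p $ k)\<^sup>2"
proof -
  define m where "m = Lbar q $ p $ k"
  have "Vmat q $ p $ k = (\<integral>L. (L$p$k)\<^sup>2 - 2 * m * L$p$k + m\<^sup>2 \<partial>q)"
    unfolding Vmat_def m_def by (simp add: power2_diff algebra_simps)
  also have "\<dots> = (\<integral>L. (L$p$k)\<^sup>2 \<partial>q) - 2 * m * (\<integral>L. L$p$k \<partial>q) + m\<^sup>2"
    using integrable_fin2_sq_nth integrable_fin2_nth by (simp add: prob_space)
  finally show ?thesis by (simp add: Lbar_nth[symmetric] m_def power2_eq_square)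
qed

lemma integral_frob_inner_mult:
  "integrable q (\<lambda>L. frob_inner Z (X ** L))"
  "(\<integral>L. frob_inner Z (X ** L) \<partial>q) = frob_inner Z (X ** Lbar q)"
proof -
  have eq: "frob_inner Z (X ** L) = (\<Sum>n\<in>UNIV. \<Sum>k\<in>UNIV. \<Sum>p\<in>UNIV. Z$n$k * X$n$p * L$p$k)" for L
    by (simp add: frob_inner_def matrix_matrix_mult_def sum_distrib_left mult_ac)
  show "integrable q (\<lambda>L. frob_inner Z (X ** L))"
    unfolding eq using integrable_fin2_nth by auto
  show "(\<integral>L. frob_inner Z (X ** L) \<partial>q) = frob_inner Z (X ** Lbar q)"
    unfolding eq using integrable_fin2_nth by (simp add: Lbar_nth)
qed

lemma integral_frob_sq:
  "integrable q frob_sq" "(\<integral>L. frob_sq L \<partial>q) = frob_sq (Lbar q) + (\<Sum>p\<in>UNIV. \<Sum>k\<in>UNIV. Vmat q $ p $ k)"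
  using integrable_fin2_sq_nth
  by (auto simp: frob_sq_def[abs_def] Vmat_nth sum.distrib sum_subtractf)

lemma integral_frob_sq_residual:
  assumes Z: "Z \<in> stiefel"
  shows "integrable q (\<lambda>L. frob_sq (X - Z ** transpose L))"
    "(\<integral>L. frob_sq (X - Z ** transpose L) \<partial>q)
       = frob_sq (X - Z ** transpose (Lbar q)) + (\<Sum>p\<in>UNIV. \<Sum>k\<in>UNIV. Vmat q $ p $ k)"
  using integral_frob_inner_mult[of Z X] integral_frob_sq
  by (simp_all add: frob_sq_residual_stiefel[OF Z] prob_space)

lemma ext_exp_loglik:
  fixes X :: "real^'p^'n::finite" and Z :: "real^'k^'n"
  assumes "Z \<in> stiefel" and "\<tau> > 0"
  shows "ext_exp q (loglik X Z \<tau>) = ereal (- real (CARD('n) * CARD('p)) * ln (2*pi/\<tau>) / 2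
           - \<tau> / 2 * (frob_sq (X - Z ** transpose (Lbar q)) + (\<Sum>p\<in>UNIV. \<Sum>k\<in>UNIV. Vmat q $ p $ k)))"
proof -
  have "loglik X Z \<tau> = (\<lambda>L. - real (CARD('n) * CARD('p)) * ln (2*pi/\<tau>) / 2
                               - \<tau> / 2 * frob_sq (X - Z ** transpose L))"
    by (rule ext) (rule loglik_eq[OF assms(2)])
  then show ?thesis
    using integral_frob_sq_residual[OF assms(1), of X] by (simp add: ext_exp_eq_integral prob_space)
qed

end

lemma Fobj_eq:
  fixes X :: "real^'p::finite^'n::finite" and Z :: "real^'k::finite^'n"
  assumes "fin2 q" and "Z \<in> stiefel" and "\<tau> > 0"
  shows "Fobj X gs Z \<tau> q = ereal (- real (CARD('n) * CARD('p)) * ln (2*pi/\<tau>) / 2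
           - \<tau> / 2 * (frob_sq (X - Z ** transpose (Lbar q)) + (\<Sum>p\<in>UNIV. \<Sum>k\<in>UNIV. Vmat q $ p $ k)))
           - KL q (prior_mat gs)"
  by (simp add: Fobj_def ext_exp_loglik[OF assms])

lemma is_polarU_stiefel: "is_polarU M Z \<Longrightarrow> Z \<in> stiefel"
  by (auto simp: is_polarU_def thin_svd_polar_stiefel)

lemma Fobj_rotation_le:
  assumes q: "fin2 q" and \<tau>: "\<tau> > 0" and Z: "is_polarU (X ** Lbar q) Z" and Z': "Z' \<in> stiefel"
  shows "Fobj X gs Z' \<tau> q \<le> Fobj X gs Z \<tau> q"
proof -
  obtain U D V where svd: "thin_svd (X ** Lbar q) U D V" and Z_eq: "Z = U ** transpose V"
    using Z by (auto simp: is_polarU_def)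
  have "frob_inner Z' (X ** Lbar q) \<le> frob_inner Z (X ** Lbar q)"
    using frob_inner_le_polar[OF svd Z'] by (simp add: Z_eq)
  then have "frob_sq (X - Z ** transpose (Lbar q)) \<le> frob_sq (X - Z' ** transpose (Lbar q))"
    by (simp add: frob_sq_residual_stiefel[OF Z'] frob_sq_residual_stiefel[OF is_polarU_stiefel[OF Z]])
  with \<tau> show ?thesis
    unfolding Fobj_eq[OF q Z' \<tau>] Fobj_eq[OF q is_polarU_stiefel[OF Z] \<tau>]
    by (intro ereal_minus_mono) (auto intro: mult_left_mono)
qed

lemma gaussian_precision_max:
  fixes c S t t' :: real
  assumes c: "c > 0" and S: "S > 0" and t': "t' > 0"
  shows "- c * ln (2*pi/t') / 2 - t' / 2 * S \<le> - c * ln (2*pi/(c / S)) / 2 - (c / S) / 2 * S"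
proof -
  define t where "t = c / S"
  have t: "t > 0" using c S by (simp add: t_def)
  have tS: "t * S = c" using S by (simp add: t_def)
  have l1: "ln (2*pi/t') = ln (2*pi) - ln t'" using t' by (simp add: ln_div)
  have l2: "ln (2*pi/t) = ln (2*pi) - ln t" using t by (simp add: ln_div)
  have x: "ln (t'/t) \<le> t'/t - 1" using t t' by (intro ln_le_minus_one) simp
  have "ln (t'/t) = ln t' - ln t" using t t' by (simp add: ln_div)
  hence "c * (ln t' - ln t) \<le> c * (t'/t - 1)" using x c by (intro mult_left_mono) auto
  also have "c * (t'/t - 1) = t' * S - c" using tS t by (simp add: field_simps)
  finally have "c * (ln t' - ln t) \<le> t' * S - t * S" using tS by simp
  hence "- c * (ln (2*pi) - ln t') / 2 - t' / 2 * S \<le> - c * (ln (2*pi) - ln t) / 2 - t / 2 * S"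
    by (simp add: field_simps)
  thus ?thesis unfolding t_def[symmetric] l1 l2 .
qed

lemma Fobj_precision_le:
  fixes X :: "real^'p::finite^'n::finite" and Z :: "real^'k::finite^'n"
    and q :: "(real^'k^'p) measure"
  defines "S \<equiv> frob_sq (X - Z ** transpose (Lbar q)) + (\<Sum>p\<in>UNIV. \<Sum>k\<in>UNIV. Vmat q $ p $ k)"
  assumes q: "fin2 q" and Z: "Z \<in> stiefel" and S: "S > 0" and \<tau>': "\<tau>' > 0"
  shows "Fobj X gs Z \<tau>' q \<le> Fobj X gs Z (real (CARD('n) * CARD('p)) / S) q"
proof -
  have c: "real (CARD('n) * CARD('p)) > 0" by simp
  then have \<tau>: "real (CARD('n) * CARD('p)) / S > 0" using S by simp
  show ?thesis
    unfolding Fobj_eq[OF q Z \<tau>'] Fobj_eq[OF q Z \<tau>] S_def[symmetric]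
    using gaussian_precision_max[OF c S \<tau>'] by (intro ereal_minus_mono) auto
qed

lemma sq_le_two_sq_diff: "(v::real)\<^sup>2 \<le> 2 * (y - v)\<^sup>2 + 2 * y\<^sup>2"
  using zero_le_power2[of "2*y - v"] by (simp add: power2_eq_square algebra_simps)

definition ebnm_evidence :: "real^'p::finite \<Rightarrow> real \<Rightarrow> real measure \<Rightarrow> real" where
  "ebnm_evidence x s2 g = (\<integral>\<eta>. exp (ebnm_loglik x s2 \<eta>) \<partial>(prior_vec g :: (real^'p) measure))"

context
  fixes x :: "real^'p::finite" and \<tau> :: real
  assumes \<tau>: "\<tau> > 0"
begin

lemma ebnm_loglik_le: "ebnm_loglik x (1/\<tau>) \<eta> \<le> - real CARD('p) * ln (2*pi/\<tau>) / 2"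
  using \<tau> by (simp add: ebnm_loglik_eq sum_nonneg)

lemma borel_measurable_ebnm_loglik: "ebnm_loglik x (1/\<tau>) \<in> borel_measurable borel"
proof -
  have "(\<lambda>\<eta>. - real CARD('p) * ln (2*pi/\<tau>) / 2 - \<tau> / 2 * (\<Sum>p\<in>UNIV. (x $ p - \<eta> $ p)\<^sup>2))
          \<in> borel_measurable borel"
    by (intro borel_measurable_continuous_onI continuous_intros)
  moreover have "ebnm_loglik x (1/\<tau>) = (\<lambda>\<eta>. - real CARD('p) * ln (2*pi/\<tau>) / 2
                   - \<tau> / 2 * (\<Sum>p\<in>UNIV. (x $ p - \<eta> $ p)\<^sup>2))"
    using ebnm_loglik_eq[OF \<tau>] by auto
  ultimately show ?thesis by simp
qed

lemma ebnm_loglik_measurable: "is_dist M \<Longrightarrow> ebnm_loglik x (1/\<tau>) \<in> borel_measurable M"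
  using borel_measurable_ebnm_loglik by (simp add: is_dist_measurable_iff)

lemma ebnm_obj_le_ln_evidence:
  assumes "is_dist g" and "is_dist q"
  shows "ebnm_obj x (1/\<tau>) g q \<le> ereal (ln (ebnm_evidence x (1/\<tau>) g))"
  unfolding ebnm_obj_eq ebnm_evidence_def using is_dist_prior_vec[OF assms(1)] assms(2)
  by (intro gibbs_variational_le[OF _ ebnm_loglik_measurable[OF is_dist_prior_vec[OF assms(1)]]
        ebnm_loglik_le]) (auto simp: is_dist_def)

lemma ebnm_obj_ln_evidence_attained:
  assumes "is_dist g"
  obtains q where "is_dist q" "ebnm_obj x (1/\<tau>) g q = ereal (ln (ebnm_evidence x (1/\<tau>) g))"
proof -
  let ?P = "prior_vec g :: (real^'p) measure"
  have P: "prob_space ?P" "sets ?P = sets borel"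
    using is_dist_prior_vec[OF assms] by (auto simp: is_dist_def)
  note gibbs = ebnm_loglik_measurable[OF is_dist_prior_vec[OF assms]] ebnm_loglik_le
  show ?thesis
  proof (rule that)
    show "is_dist (gibbs_measure ?P (ebnm_loglik x (1/\<tau>)))"
      using prob_space_gibbs_measure[OF P(1) gibbs] P(2) by (simp add: is_dist_def)
    show "ebnm_obj x (1/\<tau>) g (gibbs_measure ?P (ebnm_loglik x (1/\<tau>)))
            = ereal (ln (ebnm_evidence x (1/\<tau>) g))"
      unfolding ebnm_obj_eq ebnm_evidence_def by (rule gibbs_measure_attains[OF P(1) gibbs])
  qed
qed

lemma is_EBNM_ln_evidence_le:
  assumes "is_EBNM x (1/\<tau>) G g q" and "g' \<in> G" and "is_dist g'"
  shows "ereal (ln (ebnm_evidence x (1/\<tau>) g')) \<le> ebnm_obj x (1/\<tau>) g q"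
proof -
  obtain q' where "is_dist q'" "ebnm_obj x (1/\<tau>) g' q' = ereal (ln (ebnm_evidence x (1/\<tau>) g'))"
    using ebnm_obj_ln_evidence_attained[OF assms(3)] .
  with assms(1,2) show ?thesis by (metis is_EBNM_def)
qed

lemma is_EBNM_obj_eq:
  assumes "is_EBNM x (1/\<tau>) G g q" and "is_dist g"
  shows "ebnm_obj x (1/\<tau>) g q = ereal (ln (ebnm_evidence x (1/\<tau>) g))"
  using assms is_EBNM_ln_evidence_le[OF assms(1)] ebnm_obj_le_ln_evidence[OF assms(2)]
  by (intro antisym) (auto simp: is_EBNM_def)

lemma integrable_ebnm_loglik_if_is_EBNM:
  assumes E: "is_EBNM x (1/\<tau>) G g q" and g: "is_dist g"
  shows "integrable q (ebnm_loglik x (1/\<tau>))"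
proof -
  have P: "is_dist (prior_vec g :: (real^'p) measure)" and q: "is_dist q"
    using is_dist_prior_vec[OF g] E by (auto simp: is_EBNM_def)
  show ?thesis
    using ext_exp_minus_KL_real(1)[OF is_dist_prob_space[OF P] ebnm_loglik_measurable[OF P]
        ebnm_loglik_le is_dist_prob_space[OF q] _ is_EBNM_obj_eq[OF E g, unfolded ebnm_obj_eq]]
    by (simp add: is_dist_sets P q)
qed

text \<open>\<open>\<eta>\<^sub>p\<^sup>2 \<le> 2 (x\<^sub>p - \<eta>\<^sub>p)\<^sup>2 + 2 x\<^sub>p\<^sup>2\<close>, and the log-likelihood is affine in
  \<open>\<Sum>\<^sub>p (x\<^sub>p - \<eta>\<^sub>p)\<^sup>2\<close>.\<close>

lemma integrable_sum_sq_if_integrable_ebnm_loglik: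
  assumes q: "is_dist q" and int: "integrable q (ebnm_loglik x (1/\<tau>))"
  shows "integrable q (\<lambda>\<eta>. \<Sum>p\<in>UNIV. (\<eta> $ p)\<^sup>2)"
proof (rule Bochner_Integration.integrable_bound)
  define d where "d \<eta> = (\<Sum>p\<in>UNIV. (x $ p - \<eta> $ p)\<^sup>2)" for \<eta> :: "real^'p"
  interpret prob_space q using q by (simp add: is_dist_def)
  have "d = (\<lambda>\<eta>. (- real CARD('p) * ln (2*pi/\<tau>) / 2 - ebnm_loglik x (1/\<tau>) \<eta>) * (2 / \<tau>))"
    using \<tau> by (auto simp: d_def ebnm_loglik_eq field_simps)
  then have "integrable q d" using int by simp
  then show "integrable q (\<lambda>\<eta>. 2 * d \<eta> + 2 * (\<Sum>p\<in>UNIV. (x $ p)\<^sup>2))" by simp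
  show "(\<lambda>\<eta>. \<Sum>p\<in>UNIV. (\<eta> $ p)\<^sup>2) \<in> borel_measurable q"
    unfolding is_dist_measurable_iff[OF q]
    by (intro borel_measurable_continuous_onI continuous_intros)
  have "(\<Sum>p\<in>UNIV. (\<eta> $ p)\<^sup>2) \<le> (\<Sum>p\<in>UNIV. 2 * (x $ p - \<eta> $ p)\<^sup>2 + 2 * (x $ p)\<^sup>2)" for \<eta> :: "real^'p"
    by (intro sum_mono) (use sq_le_two_sq_diff in simp)
  then show "AE \<eta> in q. norm (\<Sum>p\<in>UNIV. (\<eta> $ p)\<^sup>2) \<le> norm (2 * d \<eta> + 2 * (\<Sum>p\<in>UNIV. (x $ p)\<^sup>2))"
    by (auto simp: d_def sum.distrib sum_distrib_left sum_nonneg intro!: AE_I2)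
qed

end

lemma sum_columns_inner_eq_frob_inner:
  "(\<Sum>k\<in>UNIV. \<Sum>p\<in>UNIV. (transpose X *v column k Z) $ p * L $ p $ k) = frob_inner Z (X ** L)"
proof -
  have "(\<Sum>k\<in>UNIV. \<Sum>p\<in>UNIV. (transpose X *v column k Z) $ p * L $ p $ k)
          = (\<Sum>k\<in>UNIV. \<Sum>p\<in>UNIV. \<Sum>n\<in>UNIV. Z$n$k * (X$n$p * L$p$k))"
    by (simp add: matrix_vector_mult_def transpose_def column_def sum_distrib_left sum_distrib_right mult_ac)
  also have "\<dots> = (\<Sum>k\<in>UNIV. \<Sum>n\<in>UNIV. \<Sum>p\<in>UNIV. Z$n$k * (X$n$p * L$p$k))"
    by (intro sum.cong refl sum.swap)
  also have "\<dots> = frob_inner Z (X ** L)"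
    by (subst sum.swap) (simp add: frob_inner_def matrix_matrix_mult_def sum_distrib_left)
  finally show ?thesis .
qed

lemma loglik_eq_sum_ebnm_loglik:
  fixes X :: "real^'p::finite^'n::finite" and Z :: "real^'k::finite^'n"
  assumes Z: "Z \<in> stiefel" and \<tau>: "\<tau> > 0"
  obtains C where
    "\<And>L. loglik X Z \<tau> L = C + (\<Sum>k\<in>UNIV. ebnm_loglik (transpose X *v column k Z) (1/\<tau>) (column k L))"
proof (rule that)
  fix L :: "real^'k^'p"
  define y where "y k = transpose X *v column k Z" for k
  define s where "s = (\<Sum>k\<in>UNIV. \<Sum>p\<in>UNIV. (y k $ p)\<^sup>2)"
  have "(\<Sum>k\<in>UNIV. \<Sum>p\<in>UNIV. (y k $ p - column k L $ p)\<^sup>2)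
          = s - 2 * (\<Sum>k\<in>UNIV. \<Sum>p\<in>UNIV. y k $ p * L $ p $ k) + (\<Sum>k\<in>UNIV. \<Sum>p\<in>UNIV. (L $ p $ k)\<^sup>2)"
    by (simp add: s_def column_def power2_diff sum.distrib sum_subtractf sum_distrib_left mult_ac)
  also have "(\<Sum>k\<in>UNIV. \<Sum>p\<in>UNIV. y k $ p * L $ p $ k) = frob_inner Z (X ** L)"
    unfolding y_def by (rule sum_columns_inner_eq_frob_inner)
  also have "(\<Sum>k\<in>UNIV. \<Sum>p\<in>UNIV. (L $ p $ k)\<^sup>2) = frob_sq L"
    unfolding frob_sq_def by (rule sum.swap)
  finally have cols: "(\<Sum>k\<in>UNIV. \<Sum>p\<in>UNIV. (y k $ p - column k L $ p)\<^sup>2)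
                        = s - 2 * frob_inner Z (X ** L) + frob_sq L" .
  have sum_ebnm: "(\<Sum>k\<in>UNIV. ebnm_loglik (y k) (1/\<tau>) (column k L))
          = - real (CARD('k) * CARD('p)) * ln (2*pi/\<tau>) / 2
            - \<tau> / 2 * (\<Sum>k\<in>UNIV. \<Sum>p\<in>UNIV. (y k $ p - column k L $ p)\<^sup>2)"
    by (simp add: ebnm_loglik_eq[OF \<tau>] sum_subtractf sum_distrib_left)
  show "loglik X Z \<tau> L = (- real (CARD('n) * CARD('p)) * ln (2*pi/\<tau>) / 2
          + real (CARD('k) * CARD('p)) * ln (2*pi/\<tau>) / 2 - \<tau> / 2 * (frob_sq X - s))
          + (\<Sum>k\<in>UNIV. ebnm_loglik (transpose X *v column k Z) (1/\<tau>) (column k L))"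
    unfolding loglik_eq[OF \<tau>] y_def[symmetric] frob_sq_residual_stiefel[OF Z] sum_ebnm cols
    by (simp add: field_simps)
qed

lemma fin2_prod_cols:
  assumes "\<And>k. is_dist (qs k)" and "\<And>k. integrable (qs k) (\<lambda>\<eta>. \<Sum>p\<in>UNIV. (\<eta> $ p)\<^sup>2)"
  shows "fin2 (prod_cols qs :: (real^'k::finite^'p::finite) measure)"
proof -
  have "(\<lambda>L::real^'k^'p. (norm L)\<^sup>2) = (\<lambda>L. \<Sum>k\<in>UNIV. \<Sum>p\<in>UNIV. (column k L $ p)\<^sup>2)"
    by (auto simp: norm_sq_matrix column_def intro: sum.swap)
  then show ?thesis
    using prod_cols_integral_sum(1)[of qs, OF assms] is_dist_prod_cols[of qs, OF assms(1)]
    by (simp add: fin2_def)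
qed

context
  fixes X :: "real^'p::finite^'n::finite" and Z :: "real^'k::finite^'n" and \<tau> C B :: real
    and f :: "'k \<Rightarrow> real^'p \<Rightarrow> real"
  assumes loglik_split: "\<And>L. loglik X Z \<tau> L = C + (\<Sum>k\<in>UNIV. f k (column k L))"
    and f_measurable: "\<And>k. f k \<in> borel_measurable borel"
    and f_bounded: "\<And>k \<eta>. f k \<eta> \<le> B"
begin

lemma Fobj_prod_cols_eq:
  assumes gs: "\<And>k. is_dist (gs k)" and qs: "\<And>k. is_dist (qs k)"
    and e: "\<And>k. ext_exp (qs k) (f k) - KL (qs k) (prior_vec (gs k)) = ereal (e k)"
  shows "Fobj X gs Z \<tau> (prod_cols qs) = ereal (C + (\<Sum>k\<in>UNIV. e k))"
proof -
  define P where "P k = (prior_vec (gs k) :: (real^'p) measure)" for k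
  have P: "is_dist (P k)" for k unfolding P_def by (rule is_dist_prior_vec[OF gs])
  have sets: "sets (qs k) = sets (P k)" and fm: "f k \<in> borel_measurable (P k)" for k
    using P qs f_measurable by (simp_all add: is_dist_sets is_dist_measurable_iff)
  note parts = ext_exp_minus_KL_real[OF is_dist_prob_space[OF P] fm f_bounded is_dist_prob_space[OF qs]
      sets e[folded P_def]]
  have int_f: "integrable (qs k) (f k)" for k by (rule parts(1))
  interpret Q: prob_space "prod_cols qs :: (real^'k^'p) measure"
    using is_dist_prod_cols[of qs, OF qs] by (simp add: is_dist_def)
  have "loglik X Z \<tau> = (\<lambda>L. C + (\<Sum>k\<in>UNIV. f k (column k L)))"
    using loglik_split by auto
  then have "ext_exp (prod_cols qs) (loglik X Z \<tau>) = ereal (C + (\<Sum>k\<in>UNIV. integral\<^sup>L (qs k) (f k)))"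
    using prod_cols_integral_sum[of qs f, OF qs int_f] by (simp add: ext_exp_eq_integral Q.prob_space)
  moreover have "KL (prod_cols qs) (prior_mat gs)
      = ereal (\<Sum>k\<in>UNIV. \<integral>x. ln (enn2real (RN_deriv (P k) (qs k) x)) \<partial>qs k)"
    unfolding prior_mat_eq_prod_cols[of gs, OF gs] P_def[symmetric]
    using parts(2,3) by (intro KL_prod_cols P qs)
  ultimately show ?thesis
    unfolding Fobj_def using parts(4) by (simp add: sum_subtractf)
qed

lemma Fobj_le_sum_ln_integral_exp:
  assumes gs: "\<And>k. is_dist (gs k)" and q: "is_dist q"
  shows "Fobj X gs Z \<tau> q \<le> ereal (C + (\<Sum>k\<in>UNIV. ln (\<integral>\<eta>. exp (f k \<eta>) \<partial>prior_vec (gs k))))"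
proof -
  define P where "P k = (prior_vec (gs k) :: (real^'p) measure)" for k
  have P: "is_dist (P k)" for k unfolding P_def by (rule is_dist_prior_vec[OF gs])
  have fm: "f k \<in> borel_measurable (P k)" for k using P f_measurable by (simp add: is_dist_measurable_iff)
  have pos: "(\<integral>\<eta>. exp (f k \<eta>) \<partial>P k) > 0" for k
    by (rule integral_exp_pos[OF is_dist_prob_space[OF P] fm f_bounded])
  have ll: "loglik X Z \<tau> = (\<lambda>L. C + (\<Sum>k\<in>UNIV. f k (column k L)))"
    using loglik_split by auto
  have ll_measurable: "loglik X Z \<tau> \<in> borel_measurable borel"
    unfolding ll by (intro borel_measurable_add borel_measurable_sum borel_measurable_const
        measurable_compose[OF borel_measurable_column f_measurable])
  have "loglik X Z \<tau> L \<le> C + real CARD('k) * B" for L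
    unfolding ll using sum_mono[of UNIV "\<lambda>k. f k (column k L)" "\<lambda>_. B"] f_bounded by simp
  then have "Fobj X gs Z \<tau> q \<le> ereal (ln (\<integral>L. exp (loglik X Z \<tau> L) \<partial>prior_mat gs))"
    unfolding Fobj_def using is_dist_prior_mat[of gs, OF gs] q ll_measurable
    by (intro gibbs_variational_le) (auto simp: is_dist_def is_dist_measurable_iff)
  also have "(\<integral>L. exp (loglik X Z \<tau> L) \<partial>prior_mat gs)
               = exp C * (\<Prod>k\<in>UNIV. \<integral>\<eta>. exp (f k \<eta>) \<partial>P k)"
    unfolding prior_mat_eq_prod_cols[of gs, OF gs] P_def[symmetric] ll
    using prod_cols_integral_prod[OF P integrable_exp_bounded_above[OF is_dist_prob_space[OF P] fm f_bounded]]
    by (simp add: exp_add exp_sum)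
  also have "ln \<dots> = C + (\<Sum>k\<in>UNIV. ln (\<integral>\<eta>. exp (f k \<eta>) \<partial>P k))"
    using pos by (simp add: ln_mult prod_pos ln_prod less_imp_neq[symmetric])
  finally show ?thesis by (simp add: P_def)
qed

end

lemma Fobj_ebnm_step:
  fixes X :: "real^'p::finite^'n::finite" and Z :: "real^'k::finite^'n"
  assumes G: "\<forall>g\<in>G. is_dist g" and Z: "Z \<in> stiefel" and \<tau>: "\<tau> > 0"
    and E: "\<forall>k. is_EBNM (transpose X *v column k Z) (1/\<tau>) G (gs k) (qs k)"
  shows "(\<forall>k. gs k \<in> G) \<and> fin2 (prod_cols qs) \<and>
      (\<forall>gs' q'. (\<forall>k. gs' k \<in> G) \<and> fin2 q' \<longrightarrow> Fobj X gs' Z \<tau> q' \<le> Fobj X gs Z \<tau> (prod_cols qs))"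
proof -
  define y where "y k = transpose X *v column k Z" for k
  obtain C where split: "\<And>L. loglik X Z \<tau> L = C + (\<Sum>k\<in>UNIV. ebnm_loglik (y k) (1/\<tau>) (column k L))"
    using loglik_eq_sum_ebnm_loglik[OF Z \<tau>] unfolding y_def by blast
  note split_lemmas = Fobj_prod_cols_eq[OF split borel_measurable_ebnm_loglik[OF \<tau>] ebnm_loglik_le[OF \<tau>]]
    Fobj_le_sum_ln_integral_exp[OF split borel_measurable_ebnm_loglik[OF \<tau>] ebnm_loglik_le[OF \<tau>]]
  have E: "is_EBNM (y k) (1/\<tau>) G (gs k) (qs k)" for k
    using E by (simp add: y_def)
  have gs: "gs k \<in> G" "is_dist (gs k)" and qs: "is_dist (qs k)" for k
    using E[of k] G by (auto simp: is_EBNM_def y_def)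
  have opt: "ebnm_obj (y k) (1/\<tau>) (gs k) (qs k) = ereal (ln (ebnm_evidence (y k) (1/\<tau>) (gs k)))" for k
    using is_EBNM_obj_eq[OF \<tau> E gs(2)] .
  have Fobj_value: "Fobj X gs Z \<tau> (prod_cols qs) = ereal (C + (\<Sum>k\<in>UNIV. ln (ebnm_evidence (y k) (1/\<tau>) (gs k))))"
    by (intro split_lemmas(1) gs qs opt[unfolded ebnm_obj_eq])
  have fin2: "fin2 (prod_cols qs)"
    using qs integrable_ebnm_loglik_if_is_EBNM[OF \<tau> E gs(2)]
    by (intro fin2_prod_cols integrable_sum_sq_if_integrable_ebnm_loglik[OF \<tau>])
  have "Fobj X gs' Z \<tau> q' \<le> Fobj X gs Z \<tau> (prod_cols qs)" if gs': "\<forall>k. gs' k \<in> G" and q': "fin2 q'" for gs' q'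
  proof -
    have "ln (ebnm_evidence (y k) (1/\<tau>) (gs' k)) \<le> ln (ebnm_evidence (y k) (1/\<tau>) (gs k))" for k
      using is_EBNM_ln_evidence_le[OF \<tau> E] gs' G opt by fastforce
    then have "ereal (C + (\<Sum>k\<in>UNIV. ln (ebnm_evidence (y k) (1/\<tau>) (gs' k))))
                 \<le> Fobj X gs Z \<tau> (prod_cols qs)"
      unfolding Fobj_value by (simp add: sum_mono)
    moreover have "Fobj X gs' Z \<tau> q' \<le> ereal (C + (\<Sum>k\<in>UNIV. ln (ebnm_evidence (y k) (1/\<tau>) (gs' k))))"
      using gs' G q' unfolding ebnm_evidence_def by (intro split_lemmas(2)) (auto simp: fin2_def)
    ultimately show ?thesis by order
  qed
  with gs fin2 show ?thesis by blast
qed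

theorem proposition1:
  fixes X :: "real^'p::finite^'n::finite"
    and G :: "real measure set"
  assumes G_dists: "\<forall>g\<in>G. is_dist g"
  shows
  \<comment> \<open>(1) EBNM step\<close>
  "(\<forall>(Z :: real^'k::finite^'n) \<tau> gs qs.
      Z \<in> stiefel \<and> \<tau> > 0 \<and>
      (\<forall>k. is_EBNM (transpose X *v column k Z) (1 / \<tau>) G (gs k) (qs k)) \<longrightarrow>
      (\<forall>k. gs k \<in> G) \<and> fin2 (prod_cols qs) \<and>
      (\<forall>gs' q'. (\<forall>k. gs' k \<in> G) \<and> fin2 q' \<longrightarrow>
          Fobj X gs' Z \<tau> q' \<le> Fobj X gs Z \<tau> (prod_cols qs)))
   \<and>
  \<comment> \<open>(2) rotation step\<close>
   (\<forall>(gs :: 'k \<Rightarrow> real measure) q \<tau> Z.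
      (\<forall>k. gs k \<in> G) \<and> fin2 q \<and> \<tau> > 0 \<and> is_polarU (X ** Lbar q) Z \<longrightarrow>
      Z \<in> stiefel \<and> (\<forall>Z' \<in> stiefel. Fobj X gs Z' \<tau> q \<le> Fobj X gs Z \<tau> q))
   \<and>
  \<comment> \<open>(3) precision step\<close>
   (\<forall>(gs :: 'k \<Rightarrow> real measure) (Z :: real^'k^'n) q.
      (\<forall>k. gs k \<in> G) \<and> Z \<in> stiefel \<and> fin2 q \<and>
      frob_sq (X - Z ** transpose (Lbar q)) + (\<Sum>p\<in>UNIV. \<Sum>k\<in>UNIV. Vmat q $ p $ k) > 0 \<longrightarrow>
      (let \<tau> = real (CARD('n) * CARD('p)) /
                 (frob_sq (X - Z ** transpose (Lbar q)) + (\<Sum>p\<in>UNIV. \<Sum>k\<in>UNIV. Vmat q $ p $ k))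
       in \<forall>\<tau>' > 0. Fobj X gs Z \<tau>' q \<le> Fobj X gs Z \<tau> q))"
  unfolding Let_def
proof ((intro conjI; intro allI impI; elim conjE), goal_cases)
  case (1 Z \<tau> gs qs)
  then show ?case by (rule Fobj_ebnm_step[OF G_dists])
next
  case (2 gs q \<tau> Z)
  then show ?case using is_polarU_stiefel Fobj_rotation_le by blast
next
  case (3 gs Z q \<tau>')
  then show ?case by (intro Fobj_precision_le) simp_all
qed

end
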